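(* Let $n\ge2$, $R>0$, and $B_R\subset\mathbb{R}^n$ a ball of radius $R$. Then $$\lim_{m\to\infty}m\,\lambda_m(B_R)=\frac{P^2(B_R)}{|B_R|}.$$
   Context: For a bounded smooth domain $\Omega$ and $m>0$, $\lambda_m(\Omega)=\inf\{(\int_\Omega|\nabla u|^2dx+\frac1m(\int_{\partial\Omega}|u|\,d\sigma)^2)/\int_\Omega u^2dx:u\in H^1(\Omega),u\ne0\}$. $P(B_R)$ and $|B_R|$ are the perimeter and volume of $B_R$. *)

theory Defs
  imports "HOL-Analysis.Analysis"
begin

definition pd :: "'n::finite \<Rightarrow> (real^'n \<Rightarrow> real) \<Rightarrow> real^'n \<Rightarrow> real" where
  "pd i f x = frechet_derivative f (at x) (axis i 1)"

coinductive smooth_on :: "(real^'n::finite \<Rightarrow> real) \<Rightarrow> (real^'n) set \<Rightarrow> bool" where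
  "open S \<Longrightarrow> f differentiable_on S \<Longrightarrow> (\<forall>i. smooth_on (pd i f) S) \<Longrightarrow> smooth_on f S"

text \<open>Test functions C_c^infinity(Omega) (extended by zero to all of the space).\<close>
definition test_fun :: "(real^'n::finite) set \<Rightarrow> (real^'n \<Rightarrow> real) \<Rightarrow> bool" where
  "test_fun \<Omega> \<phi> \<longleftrightarrow> smooth_on \<phi> UNIV \<and> compact (closure {x. \<phi> x \<noteq> 0})
      \<and> closure {x. \<phi> x \<noteq> 0} \<subseteq> \<Omega>"

definition L2_on :: "(real^'n::finite) set \<Rightarrow> (real^'n \<Rightarrow> real) \<Rightarrow> bool" where
  "L2_on \<Omega> u \<longleftrightarrow> u \<in> borel_measurable (lebesgue_on \<Omega>)
      \<and> integrable (lebesgue_on \<Omega>) (\<lambda>x. (u x)^2)"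

definition H1_grad :: "(real^'n::finite) set \<Rightarrow> (real^'n \<Rightarrow> real) \<Rightarrow> ('n \<Rightarrow> real^'n \<Rightarrow> real) \<Rightarrow> bool" where
  "H1_grad \<Omega> u g \<longleftrightarrow> L2_on \<Omega> u \<and> (\<forall>i. L2_on \<Omega> (g i)) \<and>
     (\<forall>\<phi> i. test_fun \<Omega> \<phi> \<longrightarrow>
        (\<integral>x. u x * pd i \<phi> x \<partial>lebesgue_on \<Omega>) = - (\<integral>x. g i x * \<phi> x \<partial>lebesgue_on \<Omega>))"

text \<open>Surface integral over the sphere of centre c and radius R, with respect to the
  (n-1)-dimensional surface measure, via radial projection of the ball onto its boundary:
  \<open>\<integral>_{\<partial>B_R(c)} f d\<sigma> = (n/R) \<integral>_{B_R(c)} f(c + R (x-c)/|x-c|) dx\<close>.\<close>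
definition sphere_int :: "real^'n::finite \<Rightarrow> real \<Rightarrow> (real^'n \<Rightarrow> real) \<Rightarrow> real" where
  "sphere_int c R f = (real CARD('n) / R) *
     (\<integral>x. f (c + (R / norm (x - c)) *\<^sub>R (x - c)) \<partial>lebesgue_on (ball c R))"

definition perimeter_ball :: "real^'n::finite \<Rightarrow> real \<Rightarrow> real" where
  "perimeter_ball c R = sphere_int c R (\<lambda>_. 1)"

text \<open>For u in H^1(B_R(c)) with weak gradient g, L is the value of \<open>\<integral>_{\<partial>B}|u| d\<sigma>\<close>
  (the L^1 norm of the trace of u): the trace is defined by continuous extension from
  functions smooth up to the boundary, so L is the limit of the boundary integrals of
  |v_k| along any sequence v_k of C^infinity functions converging to u in H^1(B_R(c)).\<close>
definition bdry_abs_int :: "real^'n::finite \<Rightarrow> real \<Rightarrow> (real^'n \<Rightarrow> real) \<Rightarrow> ('n \<Rightarrow> real^'n \<Rightarrow> real) \<Rightarrow> real \<Rightarrow> bool" where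
  "bdry_abs_int c R u g L \<longleftrightarrow> (\<exists>v :: nat \<Rightarrow> real^'n \<Rightarrow> real.
      (\<forall>k. smooth_on (v k) UNIV) \<and>
      ((\<lambda>k. \<integral>x. (v k x - u x)^2 \<partial>lebesgue_on (ball c R)) \<longlonglongrightarrow> 0) \<and>
      ((\<lambda>k. \<integral>x. (\<Sum>i\<in>UNIV. (pd i (v k) x - g i x)^2) \<partial>lebesgue_on (ball c R)) \<longlonglongrightarrow> 0) \<and>
      ((\<lambda>k. sphere_int c R (\<lambda>x. \<bar>v k x\<bar>)) \<longlonglongrightarrow> L))"

definition lambda_ball :: "real^'n::finite \<Rightarrow> real \<Rightarrow> real \<Rightarrow> real" where
  "lambda_ball c R m = Inf {((\<integral>x. (\<Sum>i\<in>UNIV. (g i x)^2) \<partial>lebesgue_on (ball c R)) + L^2 / m)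
        / (\<integral>x. (u x)^2 \<partial>lebesgue_on (ball c R)) | u g L.
      H1_grad (ball c R) u g \<and> bdry_abs_int c R u g L \<and>
      (\<integral>x. (u x)^2 \<partial>lebesgue_on (ball c R)) \<noteq> 0}"

end

theory Submission
  imports Defs
begin

text \<open>Testing with the constant function 1, whose trace is constant on the sphere, gives
  \<open>m \<lambda>\<^sub>m \<le> P\<^sup>2/|B|\<close>. For the reverse bound it suffices, by the approximation built into
  \<open>bdry_abs_int\<close>, to consider functions \<open>v\<close> with a continuous gradient. The Poincare
  inequality provides a constant \<open>a\<close> with \<open>|v - a|\<^sub>2 \<le> C |\<nabla>v|\<^sub>2\<close>, and integrating
  \<open>\<nabla>v\<close> along radial segments shows that the boundary integral of \<open>|v|\<close> is at least
  \<open>P |a| - C' |\<nabla>v|\<^sub>2\<close>. Since also \<open>|v|\<^sub>2 \<le> |a| \<surd>|B| + C |\<nabla>v|\<^sub>2\<close>, Young's inequality gives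
  \<open>(1 - \<epsilon>)/(1 + \<epsilon>) P\<^sup>2/|B| |v|\<^sub>2\<^sup>2 \<le> m |\<nabla>v|\<^sub>2\<^sup>2 + (\<integral>\<^sub>\<partial>\<^sub>B |v|)\<^sup>2\<close> for all \<open>m \<ge> C\<^sub>\<epsilon>\<close>.\<close>

lemma ball_cball_sets_borel [measurable]:
  fixes c :: "'a::euclidean_space"
  shows "ball c R \<in> sets borel" "cball c R \<in> sets borel"
  by (simp_all add: borel_open borel_closed)

lemma borel_measurable_lebesgue_on_borel:
  fixes f :: "'a::euclidean_space \<Rightarrow> 'b::topological_space"
  assumes "f \<in> borel_measurable borel"
  shows "f \<in> borel_measurable (lebesgue_on S)"
  using assms by (intro measurable_restrict_space1 measurable_completion) simp

lemma integrable_lebesgue_on_bounded: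
  fixes f :: "'a::euclidean_space \<Rightarrow> real"
  assumes "S \<in> lmeasurable" "f \<in> borel_measurable (lebesgue_on S)" "\<And>x. x \<in> S \<Longrightarrow> \<bar>f x\<bar> \<le> M"
  shows "integrable (lebesgue_on S) f"
proof (rule finite_measure.integrable_const_bound[OF finite_measure_lebesgue_on])
  show "AE x in lebesgue_on S. norm (f x) \<le> M"
    using assms(3) by (intro AE_I2) (simp add: space_restrict_space)
qed (use assms in auto)

lemma integrable_lebesgue_on_continuous:
  fixes f :: "'a::euclidean_space \<Rightarrow> real"
  assumes f: "continuous_on UNIV f" and S: "bounded S" "S \<in> lmeasurable"
  shows "integrable (lebesgue_on S) f"
proof -
  have "compact (f ` closure S)"
    using S by (intro compact_continuous_image continuous_on_subset[OF f]) (auto simp: compact_closure)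
  then obtain M where "\<forall>y\<in>f ` closure S. norm y \<le> M"
    by (meson bounded_iff compact_imp_bounded)
  then show ?thesis
    using S f closure_subset
    by (intro integrable_lebesgue_on_bounded[where M=M])
       (auto intro!: borel_measurable_lebesgue_on_borel borel_measurable_continuous_onI)
qed

lemma measure_lebesgue_on_ball [simp]:
  "measure (lebesgue_on (ball c R)) (ball c R) = measure lebesgue (ball (c::'a::euclidean_space) R)"
  by (subst measure_restrict_space) auto

lemma nn_integral_indicator_eq_integral_lebesgue_on:
  fixes f :: "'a::euclidean_space \<Rightarrow> real"
  assumes [measurable]: "f \<in> borel_measurable borel" "S \<in> sets borel"
    and nonneg: "\<And>x. x \<in> S \<Longrightarrow> 0 \<le> f x" and int: "integrable (lebesgue_on S) f"
  shows "(\<integral>\<^sup>+x. ennreal (f x) * indicator S x \<partial>lborel) = ennreal (\<integral>x. f x \<partial>lebesgue_on S)"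
proof -
  have "ennreal (\<integral>x. f x \<partial>lebesgue_on S) = (\<integral>\<^sup>+x. ennreal (f x) \<partial>lebesgue_on S)"
    using int nonneg
    by (subst nn_integral_eq_integral) (auto simp: AE_restrict_space_iff space_restrict_space)
  also have "\<dots> = (\<integral>\<^sup>+x. ennreal (f x) * indicator S x \<partial>lebesgue)"
    by (subst nn_integral_restrict_space) auto
  also have "\<dots> = (\<integral>\<^sup>+x. ennreal (f x) * indicator S x \<partial>lborel)"
    by (rule nn_integral_completion)
  finally show ?thesis ..
qed

lemma nn_integral_cball_eq_ball:
  fixes f :: "'a::euclidean_space \<Rightarrow> ennreal"
  shows "(\<integral>\<^sup>+z. f z * indicator (cball c R) z \<partial>lborel) = (\<integral>\<^sup>+z. f z * indicator (ball c R) z \<partial>lborel)"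
proof (rule nn_integral_cong_AE)
  have "sphere c R \<in> null_sets lborel"
    using negligible_sphere[of c R]
    by (auto simp: null_sets_completion_iff negligible_iff_null_sets negligible_convex_frontier)
  then have "AE z in lborel. z \<notin> sphere c R"
    by (rule AE_not_in)
  then show "AE z in lborel. f z * indicator (cball c R) z = f z * indicator (ball c R) z"
    by eventually_elim (auto simp: indicator_def)
qed

lemma nn_integral_lborel_affine:
  fixes f :: "'a::euclidean_space \<Rightarrow> ennreal"
  assumes [measurable]: "f \<in> borel_measurable borel" and t: "t \<noteq> 0"
  shows "(\<integral>\<^sup>+x. f (c + t *\<^sub>R x) \<partial>lborel) = ennreal (1 / \<bar>t\<bar>^DIM('a)) * (\<integral>\<^sup>+x. f x \<partial>lborel)"
proof -
  have "(\<integral>\<^sup>+x. f x \<partial>lborel)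
      = (\<integral>\<^sup>+x. f x \<partial>density (distr lborel borel (\<lambda>x. c + t *\<^sub>R x)) (\<lambda>_. \<bar>t\<bar>^DIM('a)))"
    using lborel_affine[OF t, of c] by simp
  also have "\<dots> = ennreal (\<bar>t\<bar>^DIM('a)) * (\<integral>\<^sup>+x. f (c + t *\<^sub>R x) \<partial>lborel)"
    by (simp add: nn_integral_density nn_integral_distr nn_integral_cmult)
  finally have "ennreal (1 / \<bar>t\<bar>^DIM('a)) * (\<integral>\<^sup>+x. f x \<partial>lborel)
      = ennreal (1 / \<bar>t\<bar>^DIM('a)) * ennreal (\<bar>t\<bar>^DIM('a)) * (\<integral>\<^sup>+x. f (c + t *\<^sub>R x) \<partial>lborel)"
    by (simp add: mult.assoc)
  also have "ennreal (1 / \<bar>t\<bar>^DIM('a)) * ennreal (\<bar>t\<bar>^DIM('a)) = 1"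
    using t by (simp add: ennreal_mult[symmetric])
  finally show ?thesis by simp
qed

lemma nn_integral_inverse_square_atLeast_1:
  "(\<integral>\<^sup>+t. ennreal (1 / t^2) * indicator {1..} t \<partial>lborel) = 1"
proof -
  have "((\<lambda>x::real. x powr -2) has_integral 1) {1..}"
    using has_integral_powr_to_inf[of "-2" 1] by simp
  then have "((\<lambda>x::real. 1 / x^2) has_integral 1) {1..}"
    by (rule has_integral_eq[rotated]) (auto simp: powr_minus powr_realpow divide_inverse)
  then have "(\<integral>\<^sup>+t. ennreal (1 / t^2) * indicator {1..} t \<partial>lborel) = ennreal 1"
    by (intro nn_integral_has_integral_lebesgue') auto
  then show ?thesis by simp
qed

lemma exists_le_of_nn_integral_le:
  fixes g :: "'a::euclidean_space \<Rightarrow> ennreal"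
  assumes [measurable]: "g \<in> borel_measurable borel" "B \<in> sets borel"
    and pos: "emeasure lborel B \<noteq> 0" and fin: "emeasure lborel B \<noteq> \<infinity>" and K: "K \<noteq> \<infinity>"
    and le: "(\<integral>\<^sup>+x. g x * indicator B x \<partial>lborel) \<le> K * emeasure lborel B"
  shows "\<exists>x\<in>B. g x \<le> K"
proof (rule ccontr)
  assume "\<not> (\<exists>x\<in>B. g x \<le> K)"
  then have gt: "\<And>x. x \<in> B \<Longrightarrow> K < g x" by (auto simp: not_le)
  have "(\<integral>\<^sup>+x. K * indicator B x \<partial>lborel) < (\<integral>\<^sup>+x. g x * indicator B x \<partial>lborel)"
  proof (rule nn_integral_less)
    show "(\<integral>\<^sup>+x. K * indicator B x \<partial>lborel) \<noteq> \<infinity>"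
      using K fin by (simp add: nn_integral_cmult_indicator ennreal_mult_eq_top_iff)
    show "AE x in lborel. K * indicator B x \<le> g x * indicator B x"
      using gt by (auto simp: indicator_def less_imp_le)
    show "\<not> (AE x in lborel. g x * indicator B x \<le> K * indicator B x)"
    proof
      assume "AE x in lborel. g x * indicator B x \<le> K * indicator B x"
      then have "AE x in lborel. x \<notin> B"
        by eventually_elim (use gt in \<open>fastforce simp: indicator_def not_le split: if_splits\<close>)
      then have "emeasure lborel B = 0"
        by (subst AE_iff_measurable[symmetric, where P="\<lambda>x. x \<notin> B"]) auto
      then show False using pos by simp
    qed
  qed measurable
  then show False
    using le by (simp add: nn_integral_cmult_indicator)
qed

lemma square_integrable_mult:
  fixes f g :: "'a \<Rightarrow> real"
  assumes [measurable]: "f \<in> borel_measurable M" "g \<in> borel_measurable M"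
    and "integrable M (\<lambda>x. (f x)^2)" "integrable M (\<lambda>x. (g x)^2)"
  shows "integrable M (\<lambda>x. f x * g x)"
proof (rule Bochner_Integration.integrable_bound)
  show "integrable M (\<lambda>x. ((f x)^2 + (g x)^2) / 2)" using assms by auto
  show "AE x in M. norm (f x * g x) \<le> norm (((f x)^2 + (g x)^2) / 2)"
  proof (intro AE_I2)
    fix x
    have "0 \<le> (\<bar>f x\<bar> - \<bar>g x\<bar>)^2" by simp
    then have "\<bar>f x\<bar> * \<bar>g x\<bar> \<le> ((f x)^2 + (g x)^2) / 2"
      by (simp add: power2_diff power2_abs)
    moreover have "norm (f x * g x) = \<bar>f x\<bar> * \<bar>g x\<bar>" by (simp only: real_norm_def abs_mult)
    moreover have "norm (((f x)^2 + (g x)^2) / 2) = ((f x)^2 + (g x)^2) / 2"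
      by (simp only: real_norm_def) (simp add: abs_of_nonneg)
    ultimately show "norm (f x * g x) \<le> norm (((f x)^2 + (g x)^2) / 2)"
      by linarith
  qed
qed measurable

lemma square_integrable_diff:
  fixes f g :: "'a \<Rightarrow> real"
  assumes [measurable]: "f \<in> borel_measurable M" "g \<in> borel_measurable M"
    and fi: "integrable M (\<lambda>x. (f x)^2)" and gi: "integrable M (\<lambda>x. (g x)^2)"
  shows "integrable M (\<lambda>x. (f x - g x)^2)"
proof (rule Bochner_Integration.integrable_bound)
  show "integrable M (\<lambda>x. 2 * (f x)^2 + 2 * (g x)^2)" using fi gi by auto
  show "AE x in M. norm ((f x - g x)^2) \<le> norm (2 * (f x)^2 + 2 * (g x)^2)"
  proof (intro AE_I2)
    fix x
    have "0 \<le> (f x + g x)^2" by simp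
    then have "(f x - g x)^2 \<le> 2 * (f x)^2 + 2 * (g x)^2"
      by (simp add: power2_diff power2_sum)
    then show "norm ((f x - g x)^2) \<le> norm (2 * (f x)^2 + 2 * (g x)^2)"
      by (simp only: real_norm_def) (simp add: abs_of_nonneg)
  qed
qed measurable

lemma Cauchy_Schwarz_integral:
  fixes f g :: "'a \<Rightarrow> real"
  assumes [measurable]: "f \<in> borel_measurable M" "g \<in> borel_measurable M"
    and fi: "integrable M (\<lambda>x. (f x)^2)" and gi: "integrable M (\<lambda>x. (g x)^2)"
  shows "(\<integral>x. f x * g x \<partial>M)^2 \<le> (\<integral>x. (f x)^2 \<partial>M) * (\<integral>x. (g x)^2 \<partial>M)"
proof -
  have afg: "integrable M (\<lambda>x. \<bar>f x\<bar> * \<bar>g x\<bar>)"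
    using integrable_abs[OF square_integrable_mult[OF assms]] by (simp add: abs_mult)
  have "(\<integral>\<^sup>+x. ennreal \<bar>f x\<bar> * ennreal \<bar>g x\<bar> \<partial>M)^2
      \<le> (\<integral>\<^sup>+x. (ennreal \<bar>f x\<bar>)^2 \<partial>M) * (\<integral>\<^sup>+x. (ennreal \<bar>g x\<bar>)^2 \<partial>M)"
    by (rule Cauchy_Schwarz_nn_integral) measurable
  also have "(\<integral>\<^sup>+x. (ennreal \<bar>f x\<bar>)^2 \<partial>M) = ennreal (\<integral>x. (f x)^2 \<partial>M)"
    using fi by (subst nn_integral_eq_integral[symmetric]) (auto simp: ennreal_power)
  also have "(\<integral>\<^sup>+x. (ennreal \<bar>g x\<bar>)^2 \<partial>M) = ennreal (\<integral>x. (g x)^2 \<partial>M)"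
    using gi by (subst nn_integral_eq_integral[symmetric]) (auto simp: ennreal_power)
  also have "(\<integral>\<^sup>+x. ennreal \<bar>f x\<bar> * ennreal \<bar>g x\<bar> \<partial>M) = ennreal (\<integral>x. \<bar>f x\<bar> * \<bar>g x\<bar> \<partial>M)"
    using afg by (subst nn_integral_eq_integral[symmetric]) (auto simp: ennreal_mult)
  finally have "ennreal ((\<integral>x. \<bar>f x\<bar> * \<bar>g x\<bar> \<partial>M)^2) \<le> ennreal ((\<integral>x. (f x)^2 \<partial>M) * (\<integral>x. (g x)^2 \<partial>M))"
    by (simp add: ennreal_power ennreal_mult[symmetric])
  then have abs_le: "(\<integral>x. \<bar>f x\<bar> * \<bar>g x\<bar> \<partial>M)^2 \<le> (\<integral>x. (f x)^2 \<partial>M) * (\<integral>x. (g x)^2 \<partial>M)"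
    by (subst (asm) ennreal_le_iff) auto
  have "\<bar>\<integral>x. f x * g x \<partial>M\<bar> \<le> (\<integral>x. \<bar>f x\<bar> * \<bar>g x\<bar> \<partial>M)"
    using integral_abs_bound[of M "\<lambda>x. f x * g x"] by (simp add: abs_mult)
  then have "(\<integral>x. f x * g x \<partial>M)^2 \<le> (\<integral>x. \<bar>f x\<bar> * \<bar>g x\<bar> \<partial>M)^2"
    by (metis abs_ge_zero power2_abs power_mono)
  with abs_le show ?thesis by linarith
qed

lemma integral_abs_le_sqrt_integral_square:
  fixes f :: "'a \<Rightarrow> real"
  assumes M: "finite_measure M" and f: "f \<in> borel_measurable M" "integrable M (\<lambda>x. (f x)^2)"
  shows "(\<integral>x. \<bar>f x\<bar> \<partial>M) \<le> sqrt (measure M (space M)) * sqrt (\<integral>x. (f x)^2 \<partial>M)"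
proof -
  have "(\<integral>x. \<bar>f x\<bar> * 1 \<partial>M)^2 \<le> (\<integral>x. \<bar>f x\<bar>^2 \<partial>M) * (\<integral>x. 1^2 \<partial>M)"
    using f finite_measure.integrable_const[OF M]
    by (intro Cauchy_Schwarz_integral) auto
  then show ?thesis
    by (simp add: mult.commute real_le_rsqrt real_sqrt_mult[symmetric])
qed

lemma measure_mult_abs_le_integral:
  fixes f :: "'a \<Rightarrow> real"
  assumes M: "finite_measure M" and f: "integrable M f"
  shows "measure M (space M) * \<bar>a\<bar> - (\<integral>x. \<bar>f x - a\<bar> \<partial>M) \<le> (\<integral>x. \<bar>f x\<bar> \<partial>M)"
proof -
  have ic: "integrable M (\<lambda>x. \<bar>a\<bar>)"
    by (rule finite_measure.integrable_const[OF M])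
  have id: "integrable M (\<lambda>x. \<bar>f x - a\<bar>)"
    by (intro integrable_abs Bochner_Integration.integrable_diff f finite_measure.integrable_const[OF M])
  have "measure M (space M) * \<bar>a\<bar> - (\<integral>x. \<bar>f x - a\<bar> \<partial>M) = (\<integral>x. \<bar>a\<bar> - \<bar>f x - a\<bar> \<partial>M)"
    by (simp add: Bochner_Integration.integral_diff[OF ic id])
  also have "\<dots> \<le> (\<integral>x. \<bar>f x\<bar> \<partial>M)"
    by (rule integral_mono) (use ic id f in auto)
  finally show ?thesis .
qed

lemma sqrt_integral_square_le:
  fixes f :: "'a \<Rightarrow> real"
  assumes M: "finite_measure M" and [measurable]: "f \<in> borel_measurable M"
    and fi: "integrable M (\<lambda>x. (f x)^2)"
  shows "sqrt (\<integral>x. (f x)^2 \<partial>M) \<le> \<bar>a\<bar> * sqrt (measure M (space M)) + sqrt (\<integral>x. (f x - a)^2 \<partial>M)"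
proof -
  define V where "V = measure M (space M)"
  define W where "W = (\<integral>x. (f x - a)^2 \<partial>M)"
  have V: "0 \<le> V" and W: "0 \<le> W"
    by (auto simp: V_def W_def integral_nonneg_AE)
  have ic: "integrable M (\<lambda>x. c)" for c :: real
    using finite_measure.integrable_const[OF M] .
  have wi: "integrable M (\<lambda>x. (f x - a)^2)"
    using square_integrable_diff[of f M "\<lambda>_. a"] fi ic by simp
  have di: "integrable M (\<lambda>x. f x - a)"
    using square_integrable_mult[of f M "\<lambda>_. 1"] fi ic by simp
  have "(\<integral>x. (f x)^2 \<partial>M) = (\<integral>x. (f x - a)^2 + 2 * a * (f x - a) + a^2 \<partial>M)"
    by (intro Bochner_Integration.integral_cong) (auto simp: power2_eq_square algebra_simps)
  also have "\<dots> = W + 2 * a * (\<integral>x. f x - a \<partial>M) + a^2 * V"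
    using wi di ic by (simp add: W_def V_def)
  also have "2 * a * (\<integral>x. f x - a \<partial>M) \<le> 2 * \<bar>a\<bar> * (sqrt V * sqrt W)"
  proof -
    have "(\<integral>x. \<bar>f x - a\<bar> \<partial>M) \<le> sqrt V * sqrt W"
      unfolding V_def W_def by (rule integral_abs_le_sqrt_integral_square[OF M]) (use wi in auto)
    then have "\<bar>\<integral>x. f x - a \<partial>M\<bar> \<le> sqrt V * sqrt W"
      using integral_abs_bound[of M "\<lambda>x. f x - a"] by linarith
    then have "a * (\<integral>x. f x - a \<partial>M) \<le> \<bar>a\<bar> * (sqrt V * sqrt W)"
      by (metis abs_ge_self abs_ge_zero abs_mult mult_left_mono order.trans)
    then show ?thesis
      by simp
  qed
  also have "W + 2 * \<bar>a\<bar> * (sqrt V * sqrt W) + a^2 * V = (\<bar>a\<bar> * sqrt V + sqrt W)^2"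
    using V W by (simp add: power2_eq_square algebra_simps)
  finally show ?thesis
    unfolding V_def[symmetric] W_def[symmetric] using V W by (simp add: real_le_lsqrt)
qed

lemma tendsto_integral_square:
  fixes f :: "'a \<Rightarrow> real" and F :: "nat \<Rightarrow> 'a \<Rightarrow> real"
  assumes [measurable]: "f \<in> borel_measurable M" "\<And>k. F k \<in> borel_measurable M"
    and fi: "integrable M (\<lambda>x. (f x)^2)" and Fi: "\<And>k. integrable M (\<lambda>x. (F k x)^2)"
    and lim: "(\<lambda>k. \<integral>x. (F k x - f x)^2 \<partial>M) \<longlonglongrightarrow> 0"
  shows "(\<lambda>k. \<integral>x. (F k x)^2 \<partial>M) \<longlonglongrightarrow> (\<integral>x. (f x)^2 \<partial>M)"
proof -
  define d where "d k = (\<integral>x. (F k x - f x)^2 \<partial>M)" for k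
  define e where "e k = (\<integral>x. f x * (F k x - f x) \<partial>M)" for k
  have di: "integrable M (\<lambda>x. (F k x - f x)^2)" for k
    by (rule square_integrable_diff) (use fi Fi in auto)
  have ei: "integrable M (\<lambda>x. f x * (F k x - f x))" for k
    by (rule square_integrable_mult) (use fi di in auto)
  have "(\<integral>x. (F k x)^2 \<partial>M) = (\<integral>x. (F k x - f x)^2 + 2 * (f x * (F k x - f x)) + (f x)^2 \<partial>M)" for k
    by (intro Bochner_Integration.integral_cong) (auto simp: power2_eq_square algebra_simps)
  then have eq: "(\<integral>x. (F k x)^2 \<partial>M) = d k + 2 * e k + (\<integral>x. (f x)^2 \<partial>M)" for k
    using di ei fi by (simp add: d_def e_def)
  have dlim: "d \<longlonglongrightarrow> 0"
    using lim unfolding d_def .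
  have ecs: "(e k)^2 \<le> (\<integral>x. (f x)^2 \<partial>M) * d k" for k
    unfolding e_def d_def by (rule Cauchy_Schwarz_integral) (use fi di in auto)
  have "(\<lambda>k. sqrt ((\<integral>x. (f x)^2 \<partial>M) * d k)) \<longlonglongrightarrow> sqrt ((\<integral>x. (f x)^2 \<partial>M) * 0)"
    by (intro tendsto_intros dlim)
  then have sl: "(\<lambda>k. sqrt ((\<integral>x. (f x)^2 \<partial>M) * d k)) \<longlonglongrightarrow> 0" by simp
  have "\<bar>e k\<bar> \<le> sqrt ((\<integral>x. (f x)^2 \<partial>M) * d k)" for k
    using ecs[of k] by (simp add: real_le_rsqrt real_sqrt_abs[symmetric] del: real_sqrt_abs)
  then have elim: "e \<longlonglongrightarrow> 0"
    by (intro Lim_null_comparison[OF _ sl]) (auto intro!: always_eventually)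
  have "(\<lambda>k. d k + 2 * e k + (\<integral>x. (f x)^2 \<partial>M)) \<longlonglongrightarrow> 0 + 2 * 0 + (\<integral>x. (f x)^2 \<partial>M)"
    by (intro tendsto_intros dlim elim)
  then show ?thesis by (simp add: eq)
qed

lemma tendsto_integral_sum_squares:
  fixes g :: "'i::finite \<Rightarrow> 'a \<Rightarrow> real" and D :: "nat \<Rightarrow> 'i \<Rightarrow> 'a \<Rightarrow> real"
  assumes gm: "\<And>i. g i \<in> borel_measurable M" and Dm: "\<And>k i. D k i \<in> borel_measurable M"
    and gi: "\<And>i. integrable M (\<lambda>x. (g i x)^2)" and Di: "\<And>k i. integrable M (\<lambda>x. (D k i x)^2)"
    and lim: "(\<lambda>k. \<integral>x. (\<Sum>i\<in>UNIV. (D k i x - g i x)^2) \<partial>M) \<longlonglongrightarrow> 0"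
  shows "(\<lambda>k. \<integral>x. (\<Sum>i\<in>UNIV. (D k i x)^2) \<partial>M) \<longlonglongrightarrow> (\<integral>x. (\<Sum>i\<in>UNIV. (g i x)^2) \<partial>M)"
proof -
  have dsi: "integrable M (\<lambda>x. (D k i x - g i x)^2)" for k i
    by (rule square_integrable_diff[OF Dm gm Di gi])
  have "(\<lambda>k. \<integral>x. (D k i x - g i x)^2 \<partial>M) \<longlonglongrightarrow> 0" for i
  proof (rule tendsto_sandwich[OF _ _ tendsto_const lim])
    show "\<forall>\<^sub>F k in sequentially. 0 \<le> (\<integral>x. (D k i x - g i x)^2 \<partial>M)"
      by (auto intro!: always_eventually integral_nonneg_AE)
    show "\<forall>\<^sub>F k in sequentially.
        (\<integral>x. (D k i x - g i x)^2 \<partial>M) \<le> (\<integral>x. (\<Sum>i\<in>UNIV. (D k i x - g i x)^2) \<partial>M)"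
    proof (intro always_eventually allI integral_mono)
      fix k
      show "integrable M (\<lambda>x. (D k i x - g i x)^2)" by (rule dsi)
      show "integrable M (\<lambda>x. \<Sum>i\<in>UNIV. (D k i x - g i x)^2)" using dsi by auto
      show "(D k i x - g i x)^2 \<le> (\<Sum>i\<in>UNIV. (D k i x - g i x)^2)" for x
        by (rule member_le_sum) auto
    qed
  qed
  then have "(\<lambda>k. \<integral>x. (D k i x)^2 \<partial>M) \<longlonglongrightarrow> (\<integral>x. (g i x)^2 \<partial>M)" for i
    by (rule tendsto_integral_square[OF gm Dm gi Di])
  then have "(\<lambda>k. \<Sum>i\<in>UNIV. \<integral>x. (D k i x)^2 \<partial>M) \<longlonglongrightarrow> (\<Sum>i\<in>UNIV. \<integral>x. (g i x)^2 \<partial>M)"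
    by (intro tendsto_sum) auto
  then show ?thesis
    using Di gi by (simp add: Bochner_Integration.integral_sum)
qed

definition has_continuous_gradient :: "('a::euclidean_space \<Rightarrow> real) \<Rightarrow> ('a \<Rightarrow> 'a) \<Rightarrow> bool" where
  "has_continuous_gradient v gr \<longleftrightarrow>
     (\<forall>x. (v has_derivative (\<lambda>h. gr x \<bullet> h)) (at x)) \<and> continuous_on UNIV gr"

lemma has_continuous_gradientD:
  assumes "has_continuous_gradient v gr"
  shows "(v has_derivative (\<lambda>h. gr x \<bullet> h)) (at x)" and "continuous_on UNIV gr"
    and "continuous_on UNIV v" and "v \<in> borel_measurable borel" and "gr \<in> borel_measurable borel"
proof -
  show dv: "(v has_derivative (\<lambda>h. gr x \<bullet> h)) (at x)" for x
    using assms by (simp add: has_continuous_gradient_def)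
  show cg: "continuous_on UNIV gr"
    using assms by (simp add: has_continuous_gradient_def)
  show cv: "continuous_on UNIV v"
    using dv by (metis continuous_at_imp_continuous_on has_derivative_continuous)
  show "v \<in> borel_measurable borel" "gr \<in> borel_measurable borel"
    using cv cg by (auto intro: borel_measurable_continuous_onI)
qed

lemma has_continuous_gradient_diff_const:
  "has_continuous_gradient v gr \<Longrightarrow> has_continuous_gradient (\<lambda>x. v x - a) gr"
  unfolding has_continuous_gradient_def
  by (auto intro: has_derivative_eq_rhs[OF has_derivative_diff[OF _ has_derivative_const]])

lemma has_continuous_gradient_line_derivative:
  fixes \<phi> :: "'a::euclidean_space \<Rightarrow> real"
  assumes "has_continuous_gradient \<phi> gr"
  shows "((\<lambda>t. \<phi> (x + t *\<^sub>R e)) has_real_derivative (gr (x + t *\<^sub>R e) \<bullet> e)) (at t)"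
proof -
  have "((\<lambda>t. x + t *\<^sub>R e) has_derivative (\<lambda>h. h *\<^sub>R e)) (at t)"
    by (auto intro!: derivative_eq_intros)
  then have "((\<phi> \<circ> (\<lambda>t. x + t *\<^sub>R e)) has_derivative ((\<lambda>h. gr (x + t *\<^sub>R e) \<bullet> h) \<circ> (\<lambda>h. h *\<^sub>R e))) (at t)"
    by (rule diff_chain_at[OF _ has_continuous_gradientD(1)[OF assms]])
  moreover have "(\<lambda>h. gr (x + t *\<^sub>R e) \<bullet> h) \<circ> (\<lambda>h. h *\<^sub>R e) = (*) (gr (x + t *\<^sub>R e) \<bullet> e)"
    by (auto simp: fun_eq_iff inner_scaleR_right)
  ultimately show ?thesis
    unfolding has_field_derivative_def by (simp add: o_def)
qed

lemma line_increment_le_gradient_integral: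
  fixes v :: "'a::euclidean_space \<Rightarrow> real"
  assumes v: "has_continuous_gradient v gr" and ab: "a \<le> b"
  shows "ennreal \<bar>v (x0 + b *\<^sub>R d) - v (x0 + a *\<^sub>R d)\<bar>
     \<le> (\<integral>\<^sup>+t. ennreal (norm (gr (x0 + t *\<^sub>R d)) * norm d) * indicator {a..b} t \<partial>lborel)"
proof -
  note cg = has_continuous_gradientD(2)[OF v]
  define f' where "f' t = gr (x0 + t *\<^sub>R d) \<bullet> d" for t
  define g where "g t = norm (gr (x0 + t *\<^sub>R d)) * norm d" for t
  have D: "((\<lambda>t. v (x0 + t *\<^sub>R d)) has_vector_derivative f' t) (at t within {a..b})" for t
    using has_continuous_gradient_line_derivative[OF v, of x0 d t] unfolding f'_def
    by (simp add: has_real_derivative_iff_has_vector_derivative has_vector_derivative_at_within)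
  have I: "(f' has_integral (v (x0 + b *\<^sub>R d) - v (x0 + a *\<^sub>R d))) {a..b}"
    using fundamental_theorem_of_calculus[OF ab D] by simp
  have cgc: "continuous_on S (\<lambda>t. gr (x0 + t *\<^sub>R d))" for S
    by (intro continuous_on_compose2[OF cg] continuous_intros) auto
  have f'c: "continuous_on {a..b} f'" unfolding f'_def
    by (intro continuous_intros cgc)
  have gi: "g integrable_on {a..b}"
    unfolding g_def by (intro integrable_continuous_interval continuous_intros cgc)
  have le: "norm (integral {a..b} f') \<le> integral {a..b} g"
    by (rule integral_norm_bound_integral[OF integrable_continuous_interval[OF f'c] gi])
       (auto simp: f'_def g_def Cauchy_Schwarz_ineq2)
  have eq: "(\<integral>\<^sup>+t. ennreal (g t) * indicator {a..b} t \<partial>lborel) = ennreal (integral {a..b} g)"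
    by (rule nn_integral_has_integral_lebesgue'[OF _ integrable_integral[OF gi]]) (simp add: g_def)
  have "\<bar>v (x0 + b *\<^sub>R d) - v (x0 + a *\<^sub>R d)\<bar> \<le> integral {a..b} g"
    using le I by (simp add: integral_unique)
  then show ?thesis using eq unfolding g_def by simp
qed

lemma line_increment_sq_le_gradient_integral:
  fixes v :: "'a::euclidean_space \<Rightarrow> real"
  assumes v: "has_continuous_gradient v gr" and ab: "a \<le> b"
  shows "ennreal ((v (x0 + b *\<^sub>R d) - v (x0 + a *\<^sub>R d))^2)
     \<le> ennreal (b - a) * (\<integral>\<^sup>+t. ennreal ((norm (gr (x0 + t *\<^sub>R d)) * norm d)^2) * indicator {a..b} t \<partial>lborel)"
proof -
  have [measurable]: "gr \<in> borel_measurable borel"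
    using has_continuous_gradientD(5)[OF v] .
  define G where "G t = ennreal (norm (gr (x0 + t *\<^sub>R d)) * norm d) * indicator {a..b} t" for t
  have [measurable]: "G \<in> borel_measurable lborel" unfolding G_def by measurable
  have "ennreal ((v (x0 + b *\<^sub>R d) - v (x0 + a *\<^sub>R d))^2) = (ennreal \<bar>v (x0 + b *\<^sub>R d) - v (x0 + a *\<^sub>R d)\<bar>)^2"
    by (simp add: ennreal_power)
  also have "\<dots> \<le> (\<integral>\<^sup>+t. G t \<partial>lborel)^2"
    unfolding G_def by (intro power_mono line_increment_le_gradient_integral[OF v ab]) auto
  also have "(\<integral>\<^sup>+t. G t \<partial>lborel) = (\<integral>\<^sup>+t. G t * indicator {a..b} t \<partial>lborel)"
    by (intro nn_integral_cong) (auto simp: G_def indicator_def)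
  also have "(\<dots>)^2 \<le> (\<integral>\<^sup>+t. G t ^ 2 \<partial>lborel) * (\<integral>\<^sup>+t. (indicator {a..b} t :: ennreal) ^ 2 \<partial>lborel)"
    by (rule Cauchy_Schwarz_nn_integral) auto
  also have "(\<integral>\<^sup>+t. (indicator {a..b} t :: ennreal) ^ 2 \<partial>lborel) = ennreal (b - a)"
  proof -
    have "(\<integral>\<^sup>+t. (indicator {a..b} t :: ennreal) ^ 2 \<partial>lborel) = (\<integral>\<^sup>+t. indicator {a..b} t \<partial>lborel)"
      by (intro nn_integral_cong) (auto simp: indicator_def)
    then show ?thesis using ab by simp
  qed
  also have "(\<integral>\<^sup>+t. G t ^ 2 \<partial>lborel)
      = (\<integral>\<^sup>+t. ennreal ((norm (gr (x0 + t *\<^sub>R d)) * norm d)^2) * indicator {a..b} t \<partial>lborel)"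
    by (intro nn_integral_cong) (auto simp: G_def indicator_def ennreal_power[symmetric])
  finally show ?thesis by (simp add: mult.commute)
qed

section \<open>A Poincare inequality on balls\<close>

lemma convex_combination_in_ball:
  fixes x y c :: "'a::euclidean_space"
  assumes "x \<in> ball c R" "y \<in> ball c R" "0 \<le> s" "s \<le> 1"
  shows "(1 - s) *\<^sub>R x + s *\<^sub>R y \<in> ball c R"
  using convexD[OF convex_ball[of c R] assms(1,2), of "1 - s" s] assms by auto

lemma inverse_power_le_two_power:
  fixes t :: real
  assumes "1/2 \<le> t" "t \<le> 1"
  shows "1 / \<bar>t\<bar>^n \<le> 2^n"
proof -
  have "(1/2)^n \<le> t^n" using assms by (intro power_mono) auto
  then have "1 / t^n \<le> 1 / (1/2)^n" using assms
    by (intro divide_left_mono) auto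
  then show ?thesis using assms by (simp add: power_one_over)
qed

text \<open>For \<open>s \<le> 1/2\<close> the substitution \<open>x \<mapsto> (1 - s) x + s y\<close> has Jacobian \<open>(1 - s)\<^sup>n \<ge> 2\<^sup>-\<^sup>n\<close>.\<close>

lemma nn_integral_ball_convex_combination_le_half:
  fixes H :: "'a::euclidean_space \<Rightarrow> ennreal"
  assumes [measurable]: "H \<in> borel_measurable borel" and s: "0 \<le> s" "s \<le> 1/2"
  shows "(\<integral>\<^sup>+x. \<integral>\<^sup>+y. H ((1 - s) *\<^sub>R x + s *\<^sub>R y) * indicator (ball c R) x * indicator (ball c R) y \<partial>lborel \<partial>lborel)
    \<le> ennreal (2^DIM('a)) * emeasure lborel (ball c R) * (\<integral>\<^sup>+z. H z * indicator (ball c R) z \<partial>lborel)"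
    (is "?L \<le> ?R")
proof -
  let ?B = "ball c R"
  let ?K = "(\<integral>\<^sup>+z. H z * indicator ?B z \<partial>lborel)"
  have "?L = (\<integral>\<^sup>+y. \<integral>\<^sup>+x. H ((1 - s) *\<^sub>R x + s *\<^sub>R y) * indicator ?B x * indicator ?B y \<partial>lborel \<partial>lborel)"
    by (rule lborel_pair.Fubini'[symmetric]) measurable
  also have "\<dots> \<le> (\<integral>\<^sup>+y. indicator ?B y *
      (\<integral>\<^sup>+x. H (s *\<^sub>R y + (1 - s) *\<^sub>R x) * indicator ?B (s *\<^sub>R y + (1 - s) *\<^sub>R x) \<partial>lborel) \<partial>lborel)"
  proof (intro nn_integral_mono)
    fix y
    show "(\<integral>\<^sup>+x. H ((1 - s) *\<^sub>R x + s *\<^sub>R y) * indicator ?B x * indicator ?B y \<partial>lborel)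
       \<le> indicator ?B y * (\<integral>\<^sup>+x. H (s *\<^sub>R y + (1 - s) *\<^sub>R x) * indicator ?B (s *\<^sub>R y + (1 - s) *\<^sub>R x) \<partial>lborel)"
    proof (cases "y \<in> ?B")
      case True
      then show ?thesis
        using convex_combination_in_ball[of _ c R y s] s
        by (auto intro!: nn_integral_mono simp: indicator_def add.commute)
    qed simp
  qed
  also have "\<dots> = (\<integral>\<^sup>+y. indicator ?B y * (ennreal (1 / \<bar>1 - s\<bar>^DIM('a)) * ?K) \<partial>lborel)"
    using s by (subst nn_integral_lborel_affine) auto
  also have "\<dots> \<le> (\<integral>\<^sup>+y. indicator ?B y * (ennreal (2^DIM('a)) * ?K) \<partial>lborel)"
    using s
    by (intro nn_integral_mono mult_left_mono mult_right_mono ennreal_leI inverse_power_le_two_power) auto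
  also have "\<dots> = ?R"
    by (simp add: nn_integral_multc mult.commute mult.left_commute)
  finally show ?thesis .
qed

lemma nn_integral_ball_convex_combination_le:
  fixes H :: "'a::euclidean_space \<Rightarrow> ennreal"
  assumes [measurable]: "H \<in> borel_measurable borel" and s: "0 \<le> s" "s \<le> 1"
  shows "(\<integral>\<^sup>+x. \<integral>\<^sup>+y. H ((1 - s) *\<^sub>R x + s *\<^sub>R y) * indicator (ball c R) x * indicator (ball c R) y \<partial>lborel \<partial>lborel)
    \<le> ennreal (2^DIM('a)) * emeasure lborel (ball c R) * (\<integral>\<^sup>+z. H z * indicator (ball c R) z \<partial>lborel)"
    (is "?L \<le> ?R")
proof (cases "s \<le> 1/2")
  case True
  then show ?thesis
    using s by (intro nn_integral_ball_convex_combination_le_half) auto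
next
  case False
  have "?L = (\<integral>\<^sup>+y. \<integral>\<^sup>+x. H ((1 - s) *\<^sub>R x + s *\<^sub>R y) * indicator (ball c R) x * indicator (ball c R) y
      \<partial>lborel \<partial>lborel)"
    by (rule lborel_pair.Fubini'[symmetric]) measurable
  also have "\<dots> = (\<integral>\<^sup>+y. \<integral>\<^sup>+x. H ((1 - (1 - s)) *\<^sub>R y + (1 - s) *\<^sub>R x) * indicator (ball c R) y
      * indicator (ball c R) x \<partial>lborel \<partial>lborel)"
    by (intro nn_integral_cong) (simp add: algebra_simps)
  also have "\<dots> \<le> ?R"
    using False s by (intro nn_integral_ball_convex_combination_le_half) auto
  finally show ?thesis .
qed

lemma nn_integral_ball_segments_le:
  fixes H :: "'a::euclidean_space \<Rightarrow> ennreal"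
  assumes [measurable]: "H \<in> borel_measurable borel"
  shows "(\<integral>\<^sup>+x. \<integral>\<^sup>+y. \<integral>\<^sup>+s. indicator {0..1} s * H ((1 - s) *\<^sub>R x + s *\<^sub>R y)
            * indicator (ball c R) x * indicator (ball c R) y \<partial>lborel \<partial>lborel \<partial>lborel)
    \<le> ennreal (2^DIM('a)) * emeasure lborel (ball c R) * (\<integral>\<^sup>+z. H z * indicator (ball c R) z \<partial>lborel)"
    (is "?L \<le> ?C")
proof -
  have "?L = (\<integral>\<^sup>+x. \<integral>\<^sup>+s. \<integral>\<^sup>+y. indicator {0..1} s * H ((1 - s) *\<^sub>R x + s *\<^sub>R y)
            * indicator (ball c R) x * indicator (ball c R) y \<partial>lborel \<partial>lborel \<partial>lborel)"
    by (intro nn_integral_cong lborel_pair.Fubini'[symmetric]) measurable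
  also have "\<dots> = (\<integral>\<^sup>+s. \<integral>\<^sup>+x. \<integral>\<^sup>+y. indicator {0..1} s * H ((1 - s) *\<^sub>R x + s *\<^sub>R y)
            * indicator (ball c R) x * indicator (ball c R) y \<partial>lborel \<partial>lborel \<partial>lborel)"
    by (rule lborel_pair.Fubini'[symmetric]) measurable
  also have "\<dots> \<le> (\<integral>\<^sup>+(s::real). ?C * indicator {0..1} s \<partial>lborel)"
  proof (rule nn_integral_mono)
    fix s :: real
    show "(\<integral>\<^sup>+x. \<integral>\<^sup>+y. indicator {0..1} s * H ((1 - s) *\<^sub>R x + s *\<^sub>R y)
            * indicator (ball c R) x * indicator (ball c R) y \<partial>lborel \<partial>lborel) \<le> ?C * indicator {0..1} s"
      using nn_integral_ball_convex_combination_le[of H s c R] by (cases "s \<in> {0..1}") auto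
  qed
  also have "\<dots> = ?C"
    by (simp add: nn_integral_cmult_indicator)
  finally show ?thesis .
qed

lemma sq_diff_le_segment_integral:
  fixes v :: "'a::euclidean_space \<Rightarrow> real"
  assumes v: "has_continuous_gradient v gr" and xy: "x \<in> ball c R" "y \<in> ball c R"
  shows "ennreal ((v y - v x)^2)
    \<le> ennreal (4 * R^2) * (\<integral>\<^sup>+s. indicator {0..1} s * ennreal (norm (gr ((1 - s) *\<^sub>R x + s *\<^sub>R y))^2) \<partial>lborel)"
proof -
  have [measurable]: "gr \<in> borel_measurable borel"
    using has_continuous_gradientD(5)[OF v] .
  have "norm (y - x) \<le> norm (y - c) + norm (c - x)"
    using norm_triangle_ineq[of "y - c" "c - x"] by simp
  also have "\<dots> \<le> 2 * R" using xy by (simp add: dist_norm norm_minus_commute)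
  finally have nxy: "norm (y - x) \<le> 2 * R" .
  have "ennreal ((v y - v x)^2)
      \<le> ennreal (1 - 0) * (\<integral>\<^sup>+t. ennreal ((norm (gr (x + t *\<^sub>R (y - x))) * norm (y - x))^2) * indicator {0..1} t \<partial>lborel)"
    using line_increment_sq_le_gradient_integral[OF v, of 0 1 x "y - x"] by simp
  also have "\<dots> \<le> (\<integral>\<^sup>+t. ennreal (4 * R^2) * (indicator {0..1} t * ennreal (norm (gr ((1 - t) *\<^sub>R x + t *\<^sub>R y))^2)) \<partial>lborel)"
  proof (simp, intro nn_integral_mono)
    fix t
    have e: "x + t *\<^sub>R (y - x) = (1 - t) *\<^sub>R x + t *\<^sub>R y" by (simp add: algebra_simps)
    have "(norm (gr (x + t *\<^sub>R (y - x))) * norm (y - x))^2 = norm (gr (x + t *\<^sub>R (y - x)))^2 * norm (y - x)^2"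
      by (simp add: power_mult_distrib)
    also have "\<dots> \<le> norm (gr (x + t *\<^sub>R (y - x)))^2 * (2 * R)^2"
      using nxy by (intro mult_left_mono power_mono) auto
    finally have "(norm (gr (x + t *\<^sub>R (y - x))) * norm (y - x))^2 \<le> 4 * R^2 * norm (gr ((1 - t) *\<^sub>R x + t *\<^sub>R y))^2"
      by (simp add: e power_mult_distrib mult.commute)
    then show "ennreal ((norm (gr (x + t *\<^sub>R (y - x))) * norm (y - x))^2) * indicator {0..1} t
        \<le> ennreal (4 * R^2) * (indicator {0..1} t * ennreal (norm (gr ((1 - t) *\<^sub>R x + t *\<^sub>R y))^2))"
      by (auto simp: indicator_def ennreal_mult[symmetric] intro!: ennreal_leI)
  qed
  also have "\<dots> = ennreal (4 * R^2) * (\<integral>\<^sup>+s. indicator {0..1} s * ennreal (norm (gr ((1 - s) *\<^sub>R x + s *\<^sub>R y))^2) \<partial>lborel)"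
    by (rule nn_integral_cmult) measurable
  finally show ?thesis .
qed

lemma double_nn_integral_sq_diff_le:
  fixes v :: "'a::euclidean_space \<Rightarrow> real"
  assumes v: "has_continuous_gradient v gr"
  shows "(\<integral>\<^sup>+x. (\<integral>\<^sup>+y. ennreal ((v y - v x)^2) * indicator (ball c R) y \<partial>lborel) * indicator (ball c R) x \<partial>lborel)
    \<le> ennreal (4 * R^2) * (ennreal (2^DIM('a)) * emeasure lborel (ball c R)
        * (\<integral>\<^sup>+z. ennreal (norm (gr z)^2) * indicator (ball c R) z \<partial>lborel))"
    (is "?L \<le> _")
proof -
  let ?B = "ball c R"
  have [measurable]: "gr \<in> borel_measurable borel"
    using has_continuous_gradientD(5)[OF v] .
  define H where "H z = ennreal (norm (gr z)^2)" for z
  have [measurable]: "H \<in> borel_measurable borel" unfolding H_def by measurable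
  define C0 where "C0 = ennreal (4 * R^2)"
  let ?F = "\<lambda>x y (s::real). indicator {0..1} s * H ((1 - s) *\<^sub>R x + s *\<^sub>R y) * indicator ?B x * indicator ?B y"
  have "?L \<le> (\<integral>\<^sup>+x. \<integral>\<^sup>+y. C0 * (\<integral>\<^sup>+s. ?F x y s \<partial>lborel) \<partial>lborel \<partial>lborel)"
  proof (intro nn_integral_mono)
    fix x
    show "(\<integral>\<^sup>+y. ennreal ((v y - v x)^2) * indicator ?B y \<partial>lborel) * indicator ?B x
      \<le> (\<integral>\<^sup>+y. C0 * (\<integral>\<^sup>+s. ?F x y s \<partial>lborel) \<partial>lborel)"
    proof (cases "x \<in> ?B")
      case x: True
      have "ennreal ((v y - v x)^2) * indicator ?B y \<le> C0 * (\<integral>\<^sup>+s. ?F x y s \<partial>lborel)" for y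
        using sq_diff_le_segment_integral[OF v x, of y] x
        by (cases "y \<in> ?B") (simp_all add: H_def C0_def)
      then show ?thesis using x by (simp add: nn_integral_mono)
    qed simp
  qed
  also have "\<dots> = C0 * (\<integral>\<^sup>+x. \<integral>\<^sup>+y. \<integral>\<^sup>+s. ?F x y s \<partial>lborel \<partial>lborel \<partial>lborel)"
  proof -
    have "(\<integral>\<^sup>+y. C0 * (\<integral>\<^sup>+s. ?F x y s \<partial>lborel) \<partial>lborel) = C0 * (\<integral>\<^sup>+y. \<integral>\<^sup>+s. ?F x y s \<partial>lborel \<partial>lborel)" for x
      by (rule nn_integral_cmult) measurable
    then show ?thesis
      by (simp add: nn_integral_cmult[symmetric])
  qed
  also have "\<dots> \<le> C0 * (ennreal (2^DIM('a)) * emeasure lborel ?B * (\<integral>\<^sup>+z. H z * indicator ?B z \<partial>lborel))"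
    by (intro mult_left_mono nn_integral_ball_segments_le) auto
  finally show ?thesis unfolding C0_def H_def .
qed

text \<open>The constant is \<open>v x\<^sub>0\<close> for a point \<open>x\<^sub>0 \<in> B\<close> at which \<open>\<integral>\<^sub>B (v - v x\<^sub>0)\<^sup>2\<close> does not
  exceed its mean value over \<open>B\<close>.\<close>

lemma poincare_ball:
  fixes v :: "'a::euclidean_space \<Rightarrow> real"
  assumes v: "has_continuous_gradient v gr" and R: "0 < R"
  obtains a where "(\<integral>x. (v x - a)^2 \<partial>lebesgue_on (ball c R))
     \<le> 4 * R^2 * 2^DIM('a) * (\<integral>x. (norm (gr x))^2 \<partial>lebesgue_on (ball c R))"
proof -
  let ?B = "ball c R"
  have cv: "continuous_on UNIV v" and cg: "continuous_on UNIV gr"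
    using has_continuous_gradientD[OF v] by auto
  have [measurable]: "v \<in> borel_measurable borel" "gr \<in> borel_measurable borel"
    using has_continuous_gradientD[OF v] by auto
  define G2 where "G2 = (\<integral>x. (norm (gr x))^2 \<partial>lebesgue_on ?B)"
  have G2: "(\<integral>\<^sup>+z. ennreal (norm (gr z)^2) * indicator ?B z \<partial>lborel) = ennreal G2"
    unfolding G2_def
    by (rule nn_integral_indicator_eq_integral_lebesgue_on)
       (auto intro!: integrable_lebesgue_on_continuous continuous_intros cg)
  have G2nn: "0 \<le> G2" unfolding G2_def by (rule integral_nonneg_AE) auto
  define g where "g x = (\<integral>\<^sup>+y. ennreal ((v y - v x)^2) * indicator ?B y \<partial>lborel)" for x
  have [measurable]: "g \<in> borel_measurable borel" unfolding g_def by measurable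
  have "(\<integral>\<^sup>+x. g x * indicator ?B x \<partial>lborel)
     \<le> ennreal (4 * R^2) * (ennreal (2^DIM('a)) * emeasure lborel ?B * ennreal G2)"
    using double_nn_integral_sq_diff_le[OF v, of c R] unfolding g_def G2 .
  also have "\<dots> = ennreal (4 * R^2 * 2^DIM('a) * G2) * emeasure lborel ?B"
    using G2nn by (simp add: ennreal_mult mult_ac)
  finally have le: "(\<integral>\<^sup>+x. g x * indicator ?B x \<partial>lborel) \<le> ennreal (4 * R^2 * 2^DIM('a) * G2) * emeasure lborel ?B" .
  have "emeasure lborel ?B \<noteq> 0"
    using R by (simp add: emeasure_ball) (metis less_irrefl unit_ball_vol_pos of_nat_0_le_iff)
  moreover have "emeasure lborel ?B \<noteq> \<infinity>" using R by (simp add: emeasure_ball)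
  ultimately obtain x0 where x0: "x0 \<in> ?B" "g x0 \<le> ennreal (4 * R^2 * 2^DIM('a) * G2)"
    using exists_le_of_nn_integral_le[of g ?B "ennreal (4 * R^2 * 2^DIM('a) * G2)"] le by auto
  have "g x0 = ennreal (\<integral>x. (v x - v x0)^2 \<partial>lebesgue_on ?B)"
    unfolding g_def
    by (rule nn_integral_indicator_eq_integral_lebesgue_on)
       (auto intro!: integrable_lebesgue_on_continuous continuous_intros cv)
  with x0 have "(\<integral>x. (v x - v x0)^2 \<partial>lebesgue_on ?B) \<le> 4 * R^2 * 2^DIM('a) * G2"
    using G2nn by (simp add: ennreal_le_iff)
  then show ?thesis unfolding G2_def by (rule that)
qed

section \<open>A trace inequality on balls\<close>

text \<open>The centre is mapped to itself, since \<open>R / 0 = 0\<close>.\<close>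

definition radial_proj :: "'a::real_normed_vector \<Rightarrow> real \<Rightarrow> 'a \<Rightarrow> 'a" where
  "radial_proj c R x = c + (R / norm (x - c)) *\<^sub>R (x - c)"

lemma radial_proj_measurable [measurable]:
  "radial_proj (c::'a::euclidean_space) R \<in> borel_measurable borel"
  unfolding radial_proj_def by measurable

lemma radial_proj_in_cball:
  assumes "0 < R"
  shows "radial_proj c R x \<in> cball c R"
proof (cases "x = c")
  case False
  then have "norm (radial_proj c R x - c) = R"
    using assms by (simp add: radial_proj_def)
  then show ?thesis by (simp add: dist_norm norm_minus_commute)
qed (use assms in \<open>simp add: radial_proj_def\<close>)

lemma integrable_radial_proj:
  fixes f :: "'a::euclidean_space \<Rightarrow> real"
  assumes f: "continuous_on UNIV f" and R: "0 < R"
  shows "integrable (lebesgue_on (ball c R)) (\<lambda>x. f (radial_proj c R x))"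
proof -
  have "compact (f ` cball c R)"
    by (intro compact_continuous_image continuous_on_subset[OF f]) auto
  then obtain M where "\<forall>y\<in>f ` cball c R. norm y \<le> M"
    by (meson bounded_iff compact_imp_bounded)
  then have "norm (f (radial_proj c R x)) \<le> M" for x
    using radial_proj_in_cball[OF R, of c x] by blast
  then have "\<bar>f (radial_proj c R x)\<bar> \<le> M" for x
    by simp
  moreover have [measurable]: "f \<in> borel_measurable borel"
    using f by (rule borel_measurable_continuous_onI)
  ultimately show ?thesis
    by (intro integrable_lebesgue_on_bounded[where M=M] borel_measurable_lebesgue_on_borel) auto
qed

text \<open>The fundamental theorem of calculus along the ray from \<open>y\<close> to \<open>radial_proj c R y\<close>,
  parametrised as \<open>c + t (y - c)\<close> with \<open>1 \<le> t \<le> R / |y - c|\<close>.\<close>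

lemma radial_increment_le:
  fixes w :: "'a::euclidean_space \<Rightarrow> real"
  assumes w: "has_continuous_gradient w gr" and y: "y \<in> ball c R"
  shows "ennreal \<bar>w (radial_proj c R y)\<bar> \<le> ennreal \<bar>w y\<bar> +
    (\<integral>\<^sup>+t. ennreal (norm (gr (c + t *\<^sub>R (y - c))) * norm (y - c)
        * indicator {1..} t * indicator {..R} (t * norm (y - c))) \<partial>lborel)"
proof (cases "y = c")
  case True
  then show ?thesis by (simp add: radial_proj_def add_increasing2)
next
  case False
  define r where "r = norm (y - c)"
  have r: "0 < r" "r < R" using False y by (auto simp: r_def dist_norm norm_minus_commute)
  define T where "T = R / r"
  have T: "1 \<le> T" using r by (simp add: T_def)
  have "ennreal \<bar>w (c + T *\<^sub>R (y - c)) - w (c + 1 *\<^sub>R (y - c))\<bar>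
     \<le> (\<integral>\<^sup>+t. ennreal (norm (gr (c + t *\<^sub>R (y - c))) * norm (y - c)) * indicator {1..T} t \<partial>lborel)"
    by (rule line_increment_le_gradient_integral[OF w T])
  also have "\<dots> = (\<integral>\<^sup>+t. ennreal (norm (gr (c + t *\<^sub>R (y - c))) * norm (y - c)
        * indicator {1..} t * indicator {..R} (t * norm (y - c))) \<partial>lborel)"
  proof (intro nn_integral_cong)
    fix t
    have "t \<le> T \<longleftrightarrow> t * r \<le> R" using r by (simp add: T_def le_divide_eq)
    then show "ennreal (norm (gr (c + t *\<^sub>R (y - c))) * norm (y - c)) * indicator {1..T} t
        = ennreal (norm (gr (c + t *\<^sub>R (y - c))) * norm (y - c) * indicator {1..} t * indicator {..R} (t * norm (y - c)))"
      unfolding r_def[symmetric] by (auto simp: indicator_def)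
  qed
  finally have incr: "ennreal \<bar>w (c + T *\<^sub>R (y - c)) - w y\<bar> \<le> (\<integral>\<^sup>+t. ennreal (norm (gr (c + t *\<^sub>R (y - c)))
      * norm (y - c) * indicator {1..} t * indicator {..R} (t * norm (y - c))) \<partial>lborel)"
    by simp
  have "\<bar>w (c + T *\<^sub>R (y - c))\<bar> \<le> \<bar>w y\<bar> + \<bar>w (c + T *\<^sub>R (y - c)) - w y\<bar>" by linarith
  then have "ennreal \<bar>w (c + T *\<^sub>R (y - c))\<bar> \<le> ennreal \<bar>w y\<bar> + ennreal \<bar>w (c + T *\<^sub>R (y - c)) - w y\<bar>"
    by (simp add: ennreal_plus[symmetric] del: ennreal_plus)
  also have "\<dots> \<le> ennreal \<bar>w y\<bar> + (\<integral>\<^sup>+t. ennreal (norm (gr (c + t *\<^sub>R (y - c)))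
      * norm (y - c) * indicator {1..} t * indicator {..R} (t * norm (y - c))) \<partial>lborel)"
    using incr by (rule add_left_mono)
  finally show ?thesis by (simp add: T_def r_def radial_proj_def)
qed

lemma inverse_times_inverse_power_le:
  fixes t :: real
  assumes "1 \<le> t" "1 \<le> n"
  shows "1 / t * (1 / \<bar>t\<bar>^n) \<le> 1 / t^2"
proof -
  have "t^1 \<le> t^n" using assms by (intro power_increasing) auto
  then have "t * t \<le> t * t^n" using assms by (intro mult_left_mono) auto
  then show ?thesis using assms
    by (simp add: power2_eq_square divide_simps)
qed

text \<open>The substitution \<open>z = c + t (y - c)\<close> turns the slice at height \<open>t\<close> into an integral
  over \<open>cball c R\<close> with weight \<open>t\<^sup>-\<^sup>1 t\<^sup>-\<^sup>n \<le> t\<^sup>-\<^sup>2\<close>.\<close>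

lemma nn_integral_radial_slice_le:
  fixes gr :: "'a::euclidean_space \<Rightarrow> 'a"
  assumes [measurable]: "gr \<in> borel_measurable borel" and t: "1 \<le> t"
  shows "(\<integral>\<^sup>+y. ennreal (norm (gr (c + t *\<^sub>R (y - c))) * norm (y - c)
        * indicator {1..} t * indicator {..R} (t * norm (y - c))) \<partial>lborel)
    \<le> ennreal (1 / t^2) * (\<integral>\<^sup>+z. ennreal (norm (gr z) * norm (z - c) * indicator (cball c R) z) \<partial>lborel)"
proof -
  define q where "q z = ennreal (norm (gr z) * norm (z - c) * indicator (cball c R) z)" for z
  have [measurable]: "q \<in> borel_measurable borel" unfolding q_def by measurable
  have eq: "ennreal (norm (gr (c + t *\<^sub>R (y - c))) * norm (y - c) * indicator {1..} t * indicator {..R} (t * norm (y - c)))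
      = ennreal (1 / t) * q (c + t *\<^sub>R (y - c))" for y
  proof -
    have n: "norm (c + t *\<^sub>R (y - c) - c) = t * norm (y - c)" using t by simp
    have i: "indicator (cball c R) (c + t *\<^sub>R (y - c)) = (indicator {..R} (t * norm (y - c)) :: real)"
      using t by (simp add: indicator_def dist_norm)
    have "norm (gr (c + t *\<^sub>R (y - c))) * norm (y - c) * indicator {1..} t * indicator {..R} (t * norm (y - c))
        = 1 / t * (norm (gr (c + t *\<^sub>R (y - c))) * norm (c + t *\<^sub>R (y - c) - c) * indicator (cball c R) (c + t *\<^sub>R (y - c)))"
      using t unfolding n i by (simp add: field_simps)
    then show ?thesis
      unfolding q_def using t by (simp add: ennreal_mult[symmetric])
  qed
  have arg: "c + t *\<^sub>R (y - c) = (c - t *\<^sub>R c) + t *\<^sub>R y" for y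
    by (simp add: algebra_simps)
  have "(\<integral>\<^sup>+y. ennreal (norm (gr (c + t *\<^sub>R (y - c))) * norm (y - c)
        * indicator {1..} t * indicator {..R} (t * norm (y - c))) \<partial>lborel)
      = (\<integral>\<^sup>+y. ennreal (1 / t) * q (c + t *\<^sub>R (y - c)) \<partial>lborel)"
    by (simp only: eq)
  also have "\<dots> = (\<integral>\<^sup>+y. ennreal (1 / t) * q ((c - t *\<^sub>R c) + t *\<^sub>R y) \<partial>lborel)"
    by (simp only: arg)
  also have "\<dots> = ennreal (1 / t) * (ennreal (1 / \<bar>t\<bar>^DIM('a)) * (\<integral>\<^sup>+z. q z \<partial>lborel))"
    using t by (simp add: nn_integral_cmult nn_integral_lborel_affine)
  also have "\<dots> = ennreal (1 / t * (1 / \<bar>t\<bar>^DIM('a))) * (\<integral>\<^sup>+z. q z \<partial>lborel)"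
  proof -
    have "ennreal (1 / t * (1 / \<bar>t\<bar>^DIM('a))) = ennreal (1 / t) * ennreal (1 / \<bar>t\<bar>^DIM('a))"
      using t by (intro ennreal_mult) auto
    then show ?thesis by (simp add: mult.assoc)
  qed
  also have "\<dots> \<le> ennreal (1 / t^2) * (\<integral>\<^sup>+z. q z \<partial>lborel)"
    using t DIM_positive[where 'a='a]
    by (intro mult_right_mono ennreal_leI inverse_times_inverse_power_le) auto
  finally show ?thesis
    unfolding q_def .
qed

lemma nn_integral_radial_segments_le:
  fixes gr :: "'a::euclidean_space \<Rightarrow> 'a"
  assumes [measurable]: "gr \<in> borel_measurable borel" and R: "0 \<le> R"
  shows "(\<integral>\<^sup>+y. \<integral>\<^sup>+t. ennreal (norm (gr (c + t *\<^sub>R (y - c))) * norm (y - c)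
        * indicator {1..} t * indicator {..R} (t * norm (y - c))) \<partial>lborel \<partial>lborel)
    \<le> ennreal R * (\<integral>\<^sup>+z. ennreal (norm (gr z)) * indicator (ball c R) z \<partial>lborel)"
proof -
  let ?Q = "\<integral>\<^sup>+z. ennreal (norm (gr z) * norm (z - c) * indicator (cball c R) z) \<partial>lborel"
  have "(\<integral>\<^sup>+y. \<integral>\<^sup>+t. ennreal (norm (gr (c + t *\<^sub>R (y - c))) * norm (y - c)
        * indicator {1..} t * indicator {..R} (t * norm (y - c))) \<partial>lborel \<partial>lborel)
      = (\<integral>\<^sup>+t. \<integral>\<^sup>+y. ennreal (norm (gr (c + t *\<^sub>R (y - c))) * norm (y - c)
        * indicator {1..} t * indicator {..R} (t * norm (y - c))) \<partial>lborel \<partial>lborel)"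
    by (rule lborel_pair.Fubini') measurable
  also have "\<dots> \<le> (\<integral>\<^sup>+t. ?Q * (ennreal (1 / t^2) * indicator {1..} t) \<partial>lborel)"
  proof (intro nn_integral_mono)
    fix t :: real
    show "(\<integral>\<^sup>+y. ennreal (norm (gr (c + t *\<^sub>R (y - c))) * norm (y - c)
        * indicator {1..} t * indicator {..R} (t * norm (y - c))) \<partial>lborel)
      \<le> ?Q * (ennreal (1 / t^2) * indicator {1..} t)"
      using nn_integral_radial_slice_le[of gr t c R] by (cases "1 \<le> t") (auto simp: mult.commute)
  qed
  also have "\<dots> = ?Q"
    by (simp add: nn_integral_cmult nn_integral_inverse_square_atLeast_1)
  also have "\<dots> \<le> (\<integral>\<^sup>+z. ennreal R * (ennreal (norm (gr z)) * indicator (cball c R) z) \<partial>lborel)"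
  proof (intro nn_integral_mono)
    fix z
    show "ennreal (norm (gr z) * norm (z - c) * indicator (cball c R) z)
        \<le> ennreal R * (ennreal (norm (gr z)) * indicator (cball c R) z)"
    proof (cases "z \<in> cball c R")
      case True
      then have "norm (z - c) \<le> R" by (simp add: dist_norm norm_minus_commute)
      then have "norm (gr z) * norm (z - c) \<le> R * norm (gr z)"
        by (metis mult.commute mult_left_mono norm_ge_zero)
      then show ?thesis using True R by (simp add: ennreal_mult[symmetric])
    qed simp
  qed
  also have "\<dots> = ennreal R * (\<integral>\<^sup>+z. ennreal (norm (gr z)) * indicator (ball c R) z \<partial>lborel)"
    by (simp add: nn_integral_cmult nn_integral_cball_eq_ball)
  finally show ?thesis .
qed

lemma trace_nn_integral_le:
  fixes w :: "'a::euclidean_space \<Rightarrow> real"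
  assumes w: "has_continuous_gradient w gr" and R: "0 \<le> R"
  shows "(\<integral>\<^sup>+y. ennreal \<bar>w (radial_proj c R y)\<bar> * indicator (ball c R) y \<partial>lborel)
     \<le> (\<integral>\<^sup>+y. ennreal \<bar>w y\<bar> * indicator (ball c R) y \<partial>lborel)
        + ennreal R * (\<integral>\<^sup>+z. ennreal (norm (gr z)) * indicator (ball c R) z \<partial>lborel)"
proof -
  have [measurable]: "w \<in> borel_measurable borel" "gr \<in> borel_measurable borel"
    using has_continuous_gradientD[OF w] by auto
  let ?F = "\<lambda>y t. ennreal (norm (gr (c + t *\<^sub>R (y - c))) * norm (y - c)
        * indicator {1..} t * indicator {..R} (t * norm (y - c)))"
  have "(\<integral>\<^sup>+y. ennreal \<bar>w (radial_proj c R y)\<bar> * indicator (ball c R) y \<partial>lborel)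
     \<le> (\<integral>\<^sup>+y. ennreal \<bar>w y\<bar> * indicator (ball c R) y + (\<integral>\<^sup>+t. ?F y t \<partial>lborel) \<partial>lborel)"
    using radial_increment_le[OF w] by (intro nn_integral_mono) (auto simp: indicator_def)
  also have "\<dots> = (\<integral>\<^sup>+y. ennreal \<bar>w y\<bar> * indicator (ball c R) y \<partial>lborel)
      + (\<integral>\<^sup>+y. \<integral>\<^sup>+t. ?F y t \<partial>lborel \<partial>lborel)"
    by (rule nn_integral_add) measurable
  also have "\<dots> \<le> (\<integral>\<^sup>+y. ennreal \<bar>w y\<bar> * indicator (ball c R) y \<partial>lborel)
      + ennreal R * (\<integral>\<^sup>+z. ennreal (norm (gr z)) * indicator (ball c R) z \<partial>lborel)"
    using nn_integral_radial_segments_le[of gr R c] R by (intro add_left_mono) auto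
  finally show ?thesis .
qed

lemma trace_integral_le:
  fixes w :: "'a::euclidean_space \<Rightarrow> real"
  assumes w: "has_continuous_gradient w gr" and R: "0 < R"
  shows "(\<integral>x. \<bar>w (radial_proj c R x)\<bar> \<partial>lebesgue_on (ball c R))
    \<le> (\<integral>x. \<bar>w x\<bar> \<partial>lebesgue_on (ball c R)) + R * (\<integral>x. norm (gr x) \<partial>lebesgue_on (ball c R))"
proof -
  let ?M = "lebesgue_on (ball c R)"
  have cw: "continuous_on UNIV w" and cg: "continuous_on UNIV gr"
    using has_continuous_gradientD[OF w] by auto
  have [measurable]: "w \<in> borel_measurable borel" "gr \<in> borel_measurable borel"
    using has_continuous_gradientD[OF w] by auto
  have iwp: "integrable ?M (\<lambda>x. \<bar>w (radial_proj c R x)\<bar>)"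
    by (intro integrable_radial_proj continuous_intros cw R)
  have iw: "integrable ?M (\<lambda>x. \<bar>w x\<bar>)"
    by (intro integrable_lebesgue_on_continuous continuous_intros cw) auto
  have ig: "integrable ?M (\<lambda>x. norm (gr x))"
    by (intro integrable_lebesgue_on_continuous continuous_intros cg) auto
  have "ennreal (\<integral>x. \<bar>w (radial_proj c R x)\<bar> \<partial>?M)
      \<le> ennreal (\<integral>x. \<bar>w x\<bar> \<partial>?M) + ennreal R * ennreal (\<integral>x. norm (gr x) \<partial>?M)"
    using trace_nn_integral_le[OF w, of R c] R
    by (simp add: nn_integral_indicator_eq_integral_lebesgue_on[symmetric] iwp iw ig)
  also have "\<dots> = ennreal ((\<integral>x. \<bar>w x\<bar> \<partial>?M) + R * (\<integral>x. norm (gr x) \<partial>?M))"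
    using R by (simp add: ennreal_mult ennreal_plus integral_nonneg_AE)
  finally show ?thesis
    using R by (subst (asm) ennreal_le_iff) (auto intro!: add_nonneg_nonneg integral_nonneg_AE)
qed

lemma trace_lower_bound:
  fixes c :: "'a::euclidean_space" and v :: "'a \<Rightarrow> real"
  assumes v: "has_continuous_gradient v gr" and R: "0 < R"
  defines "V \<equiv> measure lebesgue (ball c R)"
  shows "V * \<bar>a\<bar> - sqrt V * (sqrt (\<integral>x. (v x - a)^2 \<partial>lebesgue_on (ball c R))
      + R * sqrt (\<integral>x. (norm (gr x))^2 \<partial>lebesgue_on (ball c R)))
    \<le> (\<integral>x. \<bar>v (radial_proj c R x)\<bar> \<partial>lebesgue_on (ball c R))"
proof -
  let ?M = "lebesgue_on (ball c R)"
  have M: "finite_measure ?M"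
    by (simp add: finite_measure_lebesgue_on)
  have cv: "continuous_on UNIV v" and cg: "continuous_on UNIV gr"
    using has_continuous_gradientD[OF v] by auto
  have [measurable]: "v \<in> borel_measurable borel" "gr \<in> borel_measurable borel"
    using has_continuous_gradientD[OF v] by auto
  have "(\<lambda>x. v x - a) \<in> borel_measurable ?M" "gr \<in> borel_measurable ?M"
    by (intro borel_measurable_lebesgue_on_borel, measurable)+
  moreover have "integrable ?M (\<lambda>x. (v x - a)^2)" "integrable ?M (\<lambda>x. (norm (gr x))^2)"
    by (intro integrable_lebesgue_on_continuous continuous_intros cv cg, simp, simp)+
  ultimately have "(\<integral>x. \<bar>v x - a\<bar> \<partial>?M) \<le> sqrt V * sqrt (\<integral>x. (v x - a)^2 \<partial>?M)"
      and L1_gr: "(\<integral>x. norm (gr x) \<partial>?M) \<le> sqrt V * sqrt (\<integral>x. (norm (gr x))^2 \<partial>?M)"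
    using integral_abs_le_sqrt_integral_square[OF M, of "\<lambda>x. v x - a"]
      integral_abs_le_sqrt_integral_square[OF M, of "\<lambda>x. norm (gr x)"]
    by (simp_all add: V_def space_restrict_space)
  moreover have "R * (\<integral>x. norm (gr x) \<partial>?M) \<le> R * (sqrt V * sqrt (\<integral>x. (norm (gr x))^2 \<partial>?M))"
    using L1_gr R by (intro mult_left_mono) auto
  moreover have "(\<integral>x. \<bar>v (radial_proj c R x) - a\<bar> \<partial>?M)
      \<le> (\<integral>x. \<bar>v x - a\<bar> \<partial>?M) + R * (\<integral>x. norm (gr x) \<partial>?M)"
    by (rule trace_integral_le[OF has_continuous_gradient_diff_const[OF v] R])
  moreover have "V * \<bar>a\<bar> - (\<integral>x. \<bar>v (radial_proj c R x) - a\<bar> \<partial>?M) \<le> (\<integral>x. \<bar>v (radial_proj c R x)\<bar> \<partial>?M)"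
    using measure_mult_abs_le_integral[OF M integrable_radial_proj[OF cv R]]
    by (simp add: V_def space_restrict_space)
  ultimately show ?thesis
    by (simp add: algebra_simps)
qed

section \<open>The lower bound for functions with a continuous gradient\<close>

lemma two_mult_le_weighted_squares:
  fixes A B e :: real
  assumes "0 < e"
  shows "2 * A * B \<le> e * A^2 + B^2 / e"
proof -
  have "0 \<le> (e * A - B)^2 / e" using assms by simp
  also have "(e * A - B)^2 / e = e * A^2 + B^2 / e - 2 * A * B"
    using assms by (simp add: power2_eq_square field_simps)
  finally show ?thesis by simp
qed

lemma square_le_of_le_add:
  fixes N A B e :: real
  assumes "0 \<le> N" "N \<le> A + B" "0 < e"
  shows "N^2 \<le> (1 + e) * A^2 + (1 + 1 / e) * B^2"
proof -
  have "N^2 \<le> (A + B)^2" using assms by (intro power_mono) auto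
  also have "\<dots> = A^2 + 2 * A * B + B^2" by (simp add: power2_eq_square algebra_simps)
  finally show ?thesis
    using two_mult_le_weighted_squares[OF assms(3), of A B] by (simp add: algebra_simps add_divide_distrib)
qed

lemma square_ge_of_diff_le:
  fixes X Y S e :: real
  assumes "0 \<le> X" "0 \<le> S" "X - Y \<le> S" "0 < e" "e < 1"
  shows "(1 - e) * X^2 - Y^2 / e \<le> S^2"
proof (cases "Y \<le> X")
  case True
  have "2 * X * Y \<le> e * X^2 + Y^2 / e"
    by (rule two_mult_le_weighted_squares[OF assms(4)])
  moreover have "(X - Y)^2 = X^2 - 2 * X * Y + Y^2"
    by (simp add: power2_diff)
  moreover have "(1 - e) * X^2 = X^2 - e * X^2"
    by (simp add: algebra_simps)
  moreover have "0 \<le> Y^2" by simp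
  ultimately have "(1 - e) * X^2 - Y^2 / e \<le> (X - Y)^2"
    by linarith
  also have "\<dots> \<le> S^2" using True assms by (intro power_mono) auto
  finally show ?thesis .
next
  case False
  then have "X^2 \<le> Y^2" using assms by (intro power_mono) auto
  moreover have "Y^2 \<le> Y^2 / e"
    using assms by (simp add: le_divide_eq mult_left_le)
  moreover have "(1 - e) * X^2 \<le> X^2" using assms by (simp add: mult_left_le_one_le)
  ultimately have "(1 - e) * X^2 - Y^2 / e \<le> 0" by linarith
  then show ?thesis by (meson order.trans zero_le_power2)
qed

text \<open>The estimates \<open>P |a| - C\<^sub>T G \<le> S\<close> (trace) and \<open>N \<le> |a| \<surd>V + \<surd>C\<^sub>P G\<close> (Poincare)
  are combined by Young's inequality, eliminating \<open>|a|\<close>.\<close>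

lemma young_combination:
  fixes P V CT CP e a G S N m :: real
  assumes V: "0 < V" and CP: "0 \<le> CP" and e: "0 < e" "e < 1"
    and nonneg: "0 \<le> P" "0 \<le> a" "0 \<le> G" "0 \<le> S" "0 \<le> N"
    and trace: "P * a - CT * G \<le> S" and poincare: "N \<le> a * sqrt V + sqrt CP * G"
    and m: "(CT^2 + P^2 / V * CP) / e \<le> m"
  shows "P^2 / V * ((1 - e) / (1 + e)) * N^2 \<le> m * G^2 + S^2"
proof -
  define k where "k = P^2 / V * ((1 - e) / (1 + e))"
  have k: "0 \<le> k" using e V by (simp add: k_def)
  have "N^2 \<le> (1 + e) * (a * sqrt V)^2 + (1 + 1 / e) * (sqrt CP * G)^2"
    using square_le_of_le_add[OF nonneg(5) poincare e(1)] .
  also have "\<dots> = (1 + e) * (a^2 * V) + (1 + 1 / e) * (CP * G^2)"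
    using V CP by (simp add: power_mult_distrib)
  finally have "k * N^2 \<le> k * ((1 + e) * (a^2 * V) + (1 + 1 / e) * (CP * G^2))"
    using k by (rule mult_left_mono)
  also have "\<dots> = (k * (1 + e)) * (a^2 * V) + (k * (1 + 1 / e)) * (CP * G^2)"
    by (simp add: algebra_simps)
  also have "k * (1 + e) = P^2 / V * (1 - e)"
    unfolding k_def using e by (simp add: mult.assoc)
  also have "k * (1 + 1 / e) = P^2 / V * ((1 - e) / e)"
  proof -
    have "(1 + 1 / e) = (1 + e) / e" using e by (simp add: field_simps)
    then show ?thesis unfolding k_def using e by (simp add: mult.assoc)
  qed
  also have "P^2 / V * (1 - e) * (a^2 * V) + P^2 / V * ((1 - e) / e) * (CP * G^2)
      = (1 - e) * (P * a)^2 + P^2 / V * ((1 - e) / e) * (CP * G^2)"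
    using V by (simp add: power_mult_distrib)
  also have "\<dots> \<le> (1 - e) * (P * a)^2 + P^2 / V * (1 / e) * (CP * G^2)"
    using e V CP by (intro add_left_mono mult_right_mono mult_left_mono divide_right_mono) auto
  also have "\<dots> \<le> S^2 + (CT * G)^2 / e + P^2 / V * (1 / e) * (CP * G^2)"
    using square_ge_of_diff_le[of "P * a" S "CT * G" e] trace nonneg e by simp
  also have "\<dots> = S^2 + ((CT^2 + P^2 / V * CP) / e) * G^2"
    using e by (simp add: field_simps power2_eq_square)
  also have "\<dots> \<le> S^2 + m * G^2"
    using m by (intro add_left_mono mult_right_mono) auto
  finally show ?thesis unfolding k_def by simp
qed

lemma C1_rayleigh_estimate:
  fixes c :: "'a::euclidean_space" and v :: "'a \<Rightarrow> real"
  assumes v: "has_continuous_gradient v gr" and R: "0 < R" and e: "0 < e" "e < 1"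
  defines "V \<equiv> measure lebesgue (ball c R)"
  defines "P \<equiv> real DIM('a) / R * V" and "CP \<equiv> 4 * R^2 * 2^DIM('a)"
  defines "CT \<equiv> real DIM('a) / R * sqrt V * (sqrt CP + R)"
  assumes m: "(CT^2 + P^2 / V * CP) / e \<le> m"
  shows "P^2 / V * ((1 - e) / (1 + e)) * (\<integral>x. (v x)^2 \<partial>lebesgue_on (ball c R))
      \<le> m * (\<integral>x. (norm (gr x))^2 \<partial>lebesgue_on (ball c R))
        + (real DIM('a) / R * (\<integral>x. \<bar>v (radial_proj c R x)\<bar> \<partial>lebesgue_on (ball c R)))^2"
proof -
  let ?M = "lebesgue_on (ball c R)"
  have cv: "continuous_on UNIV v" and [measurable]: "v \<in> borel_measurable borel"
    using has_continuous_gradientD[OF v] by auto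
  have vm: "v \<in> borel_measurable ?M"
    by (intro borel_measurable_lebesgue_on_borel) measurable
  have vi: "integrable ?M (\<lambda>x. (v x)^2)"
    by (intro integrable_lebesgue_on_continuous continuous_intros cv) auto
  have V: "0 < V" using R by (simp add: V_def)
  obtain a where a: "(\<integral>x. (v x - a)^2 \<partial>?M) \<le> CP * (\<integral>x. (norm (gr x))^2 \<partial>?M)"
    using poincare_ball[OF v R, of c] unfolding CP_def by blast
  define G where "G = sqrt (\<integral>x. (norm (gr x))^2 \<partial>?M)"
  define S where "S = real DIM('a) / R * (\<integral>x. \<bar>v (radial_proj c R x)\<bar> \<partial>?M)"
  have W: "sqrt (\<integral>x. (v x - a)^2 \<partial>?M) \<le> sqrt CP * G"
    using a by (simp add: G_def real_sqrt_mult[symmetric])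
  have "P * \<bar>a\<bar> - CT * G = real DIM('a) / R * (V * \<bar>a\<bar> - sqrt V * (sqrt CP * G + R * G))"
    using R by (simp add: P_def CT_def field_simps)
  also have "\<dots> \<le> real DIM('a) / R * (V * \<bar>a\<bar> - sqrt V * (sqrt (\<integral>x. (v x - a)^2 \<partial>?M) + R * G))"
    using W R V by (intro mult_left_mono diff_left_mono add_right_mono) auto
  also have "\<dots> \<le> S"
    unfolding S_def G_def V_def using trace_lower_bound[OF v R, of c a] R by (intro mult_left_mono) auto
  finally have trace: "P * \<bar>a\<bar> - CT * G \<le> S" .
  have "sqrt (\<integral>x. (v x)^2 \<partial>?M) \<le> \<bar>a\<bar> * sqrt V + sqrt (\<integral>x. (v x - a)^2 \<partial>?M)"
    using sqrt_integral_square_le[OF finite_measure_lebesgue_on[OF lmeasurable_ball] vm vi, of a]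
    by (simp add: V_def space_restrict_space)
  then have poincare: "sqrt (\<integral>x. (v x)^2 \<partial>?M) \<le> \<bar>a\<bar> * sqrt V + sqrt CP * G"
    using W by linarith
  have "P^2 / V * ((1 - e) / (1 + e)) * (sqrt (\<integral>x. (v x)^2 \<partial>?M))^2 \<le> m * G^2 + S^2"
    using R V e m trace poincare
    by (intro young_combination[where CT=CT and CP=CP]) (auto simp: CP_def P_def S_def G_def)
  then show ?thesis
    by (simp add: G_def S_def integral_nonneg_AE)
qed

lemma C1_rayleigh_lower_bound:
  fixes c :: "'a::euclidean_space"
  assumes R: "0 < R" and e: "0 < e" "e < 1"
  defines "V \<equiv> measure lebesgue (ball c R)"
  obtains M where "\<And>m v gr. M \<le> m \<Longrightarrow> has_continuous_gradient v gr \<Longrightarrow>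
      (real DIM('a) / R * V)^2 / V * ((1 - e) / (1 + e)) * (\<integral>x. (v x)^2 \<partial>lebesgue_on (ball c R))
        \<le> m * (\<integral>x. (norm (gr x))^2 \<partial>lebesgue_on (ball c R))
          + (real DIM('a) / R * (\<integral>x. \<bar>v (radial_proj c R x)\<bar> \<partial>lebesgue_on (ball c R)))^2"
proof -
  define CP :: real where "CP = 4 * R^2 * 2^DIM('a)"
  define CT where "CT = real DIM('a) / R * sqrt V * (sqrt CP + R)"
  show thesis
    by (rule that[of "(CT^2 + (real DIM('a) / R * V)^2 / V * CP) / e"],
        unfold V_def, rule C1_rayleigh_estimate[OF _ R e]) (simp_all add: CT_def CP_def V_def)
qed

section \<open>Passage to \<open>H\<^sup>1\<close>\<close>

lemma smooth_onD:
  assumes "smooth_on f S"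
  shows "open S" "f differentiable_on S" "\<And>i. smooth_on (pd i f) S"
  using assms by (auto elim: smooth_on.cases)

lemma smooth_on_continuous:
  assumes "smooth_on f UNIV"
  shows "continuous_on UNIV f"
  using smooth_onD(2)[OF assms] by (rule differentiable_imp_continuous_on)

lemma smooth_on_has_continuous_gradient:
  fixes v :: "real^'n::finite \<Rightarrow> real"
  assumes "smooth_on v UNIV"
  shows "has_continuous_gradient v (\<lambda>x. \<chi> i. pd i v x)"
  unfolding has_continuous_gradient_def
proof
  show "\<forall>x. (v has_derivative (\<lambda>h. (\<chi> i. pd i v x) \<bullet> h)) (at x)"
  proof
    fix x
    have "v differentiable (at x)"
      using smooth_onD(2)[OF assms] by (auto simp: differentiable_on_def)
    then have D: "(v has_derivative frechet_derivative v (at x)) (at x)"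
      by (rule frechet_derivative_works[THEN iffD1])
    then have lin: "linear (frechet_derivative v (at x))"
      by (rule has_derivative_linear)
    have "frechet_derivative v (at x) h = (\<chi> i. pd i v x) \<bullet> h" for h
    proof -
      have "frechet_derivative v (at x) h = frechet_derivative v (at x) (\<Sum>i\<in>UNIV. h $ i *s axis i 1)"
        by (simp add: basis_expansion)
      also have "\<dots> = (\<Sum>i\<in>UNIV. h $ i * frechet_derivative v (at x) (axis i 1))"
        using lin by (simp add: linear_sum linear_cmul scalar_mult_eq_scaleR)
      also have "\<dots> = (\<chi> i. pd i v x) \<bullet> h"
        by (simp add: inner_vec_def pd_def mult.commute)
      finally show ?thesis .
    qed
    then have "frechet_derivative v (at x) = (\<lambda>h. (\<chi> i. pd i v x) \<bullet> h)"
      by auto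
    with D show "(v has_derivative (\<lambda>h. (\<chi> i. pd i v x) \<bullet> h)) (at x)"
      by simp
  qed
  show "continuous_on UNIV (\<lambda>x. \<chi> i. pd i v x)"
    by (intro continuous_on_vec_lambda smooth_on_continuous smooth_onD(3)[OF assms])
qed

lemma power2_norm_vec_lambda: "(norm (\<chi> i. f i :: real^'n::finite))^2 = (\<Sum>i\<in>UNIV. (f i)^2)"
  by (subst power2_norm_eq_inner) (simp add: inner_vec_def power2_eq_square)

lemma sphere_int_eq_radial_proj:
  "sphere_int c R f = real CARD('n) / R * (\<integral>x. f (radial_proj c R x) \<partial>lebesgue_on (ball (c::real^'n::finite) R))"
  by (simp add: sphere_int_def radial_proj_def)

lemma perimeter_ball_eq:
  "perimeter_ball (c::real^'n::finite) R = real CARD('n) / R * measure lebesgue (ball c R)"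
  by (simp add: perimeter_ball_def sphere_int_def)

lemma L2_on_ball_continuous:
  fixes f :: "real^'n::finite \<Rightarrow> real"
  assumes "continuous_on UNIV f"
  shows "L2_on (ball c R) f"
  unfolding L2_on_def using assms
  by (auto intro!: borel_measurable_lebesgue_on_borel borel_measurable_continuous_onI
      integrable_lebesgue_on_continuous continuous_intros)

lemma H1_rayleigh_lower_bound:
  fixes c :: "real^'n::finite"
  assumes R: "0 < R" and e: "0 < e" "e < 1"
  obtains M where "\<And>m u g L. M \<le> m \<Longrightarrow> H1_grad (ball c R) u g \<Longrightarrow> bdry_abs_int c R u g L \<Longrightarrow>
      (perimeter_ball c R)^2 / measure lebesgue (ball c R) * ((1 - e) / (1 + e))
        * (\<integral>x. (u x)^2 \<partial>lebesgue_on (ball c R))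
      \<le> m * (\<integral>x. (\<Sum>i\<in>UNIV. (g i x)^2) \<partial>lebesgue_on (ball c R)) + L^2"
proof -
  let ?M = "lebesgue_on (ball c R)"
  define \<kappa> where "\<kappa> = (perimeter_ball c R)^2 / measure lebesgue (ball c R) * ((1 - e) / (1 + e))"
  obtain M where M: "\<And>m v gr. M \<le> m \<Longrightarrow> has_continuous_gradient v gr \<Longrightarrow>
      \<kappa> * (\<integral>x. (v x)^2 \<partial>?M) \<le> m * (\<integral>x. (norm (gr x))^2 \<partial>?M)
        + (real CARD('n) / R * (\<integral>x. \<bar>v (radial_proj c R x)\<bar> \<partial>?M))^2"
    using C1_rayleigh_lower_bound[OF R e, of c] unfolding \<kappa>_def perimeter_ball_eq by auto
  show thesis
  proof (rule that[of M], fold \<kappa>_def)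
    fix m u g L
    assume m: "M \<le> m" and H: "H1_grad (ball c R) u g" and B: "bdry_abs_int c R u g L"
    obtain v :: "nat \<Rightarrow> real^'n \<Rightarrow> real" where
      vs: "\<And>k. smooth_on (v k) UNIV" and
      vl: "(\<lambda>k. \<integral>x. (v k x - u x)^2 \<partial>?M) \<longlonglongrightarrow> 0" and
      gl: "(\<lambda>k. \<integral>x. (\<Sum>i\<in>UNIV. (pd i (v k) x - g i x)^2) \<partial>?M) \<longlonglongrightarrow> 0" and
      sl: "(\<lambda>k. sphere_int c R (\<lambda>x. \<bar>v k x\<bar>)) \<longlonglongrightarrow> L"
      using B unfolding bdry_abs_int_def by blast
    have um: "u \<in> borel_measurable ?M" and ui: "integrable ?M (\<lambda>x. (u x)^2)"
      and gm: "\<And>i. g i \<in> borel_measurable ?M" and gi: "\<And>i. integrable ?M (\<lambda>x. (g i x)^2)"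
      using H unfolding H1_grad_def L2_on_def by auto
    have "L2_on (ball c R) (v k)" "L2_on (ball c R) (pd i (v k))" for k i
      by (intro L2_on_ball_continuous smooth_on_continuous vs smooth_onD(3)[OF vs])+
    then have vm: "v k \<in> borel_measurable ?M" and vi: "integrable ?M (\<lambda>x. (v k x)^2)"
      and pm: "pd i (v k) \<in> borel_measurable ?M" and pi: "integrable ?M (\<lambda>x. (pd i (v k) x)^2)" for k i
      unfolding L2_on_def by auto
    have "\<kappa> * (\<integral>x. (v k x)^2 \<partial>?M)
        \<le> m * (\<integral>x. (\<Sum>i\<in>UNIV. (pd i (v k) x)^2) \<partial>?M) + (sphere_int c R (\<lambda>x. \<bar>v k x\<bar>))^2" for k
      using M[OF m smooth_on_has_continuous_gradient[OF vs]]
      by (simp add: power2_norm_vec_lambda sphere_int_eq_radial_proj)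
    moreover have "(\<lambda>k. \<integral>x. (v k x)^2 \<partial>?M) \<longlonglongrightarrow> (\<integral>x. (u x)^2 \<partial>?M)"
      by (rule tendsto_integral_square[OF um vm ui vi vl])
    moreover have "(\<lambda>k. \<integral>x. (\<Sum>i\<in>UNIV. (pd i (v k) x)^2) \<partial>?M) \<longlonglongrightarrow> (\<integral>x. (\<Sum>i\<in>UNIV. (g i x)^2) \<partial>?M)"
      by (rule tendsto_integral_sum_squares[OF gm pm gi pi gl])
    ultimately show "\<kappa> * (\<integral>x. (u x)^2 \<partial>?M) \<le> m * (\<integral>x. (\<Sum>i\<in>UNIV. (g i x)^2) \<partial>?M) + L^2"
      by (intro LIMSEQ_le[OF tendsto_mult[OF tendsto_const] tendsto_add[OF tendsto_mult[OF tendsto_const] tendsto_power[OF sl]]])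
         auto
  qed
qed

section \<open>The constant test function\<close>

lemma pd_const: "pd i (\<lambda>_. k) = (\<lambda>_. 0)"
  by (simp add: pd_def fun_eq_iff)

lemma smooth_on_const: "smooth_on (\<lambda>_. k :: real) (UNIV :: (real^'n::finite) set)"
proof -
  have "\<exists>k. f = (\<lambda>_. k :: real) \<and> S = (UNIV :: (real^'n) set) \<Longrightarrow> smooth_on f S" for f S
  proof (coinduction arbitrary: f S rule: smooth_on.coinduct)
    case (smooth_on f S)
    then obtain k where "f = (\<lambda>_. k)" "S = UNIV" by blast
    then show ?case by (auto simp: pd_const)
  qed
  then show ?thesis by blast
qed

lemma pd_eq_0_outside_support:
  fixes \<phi> :: "real^'n::finite \<Rightarrow> real"
  assumes "x \<notin> closure {x. \<phi> x \<noteq> 0}"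
  shows "pd j \<phi> x = 0"
proof -
  have "(\<phi> has_derivative (\<lambda>_. 0)) (at x)"
  proof (rule has_derivative_transform_within_open[OF has_derivative_const])
    show "open (- closure {x. \<phi> x \<noteq> 0})" by auto
    show "x \<in> - closure {x. \<phi> x \<noteq> 0}" using assms by simp
    fix y
    assume "y \<in> - closure {x. \<phi> x \<noteq> 0}"
    then show "0 = \<phi> y" using closure_subset[of "{x. \<phi> x \<noteq> 0}"] by auto
  qed
  then have "frechet_derivative \<phi> (at x) = (\<lambda>_. 0)"
    by (rule frechet_derivative_at[symmetric])
  then show ?thesis by (simp add: pd_def)
qed

lemma continuous_vanishing_outside_cball_bound:
  fixes f :: "'a::euclidean_space \<Rightarrow> 'b::real_normed_vector"
  assumes f: "continuous_on UNIV f" and vanish: "\<And>x. x \<notin> cball c R \<Longrightarrow> f x = 0"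
  obtains M where "0 \<le> M" "\<And>x. norm (f x) \<le> M * indicator (cball c R) x"
proof -
  have "compact (f ` cball c R)"
    by (intro compact_continuous_image continuous_on_subset[OF f]) auto
  then obtain M0 where M0: "\<forall>y\<in>f ` cball c R. norm y \<le> M0"
    by (meson bounded_iff compact_imp_bounded)
  show thesis
  proof (rule that[of "max M0 0"])
    fix x
    show "norm (f x) \<le> max M0 0 * indicator (cball c R) x"
    proof (cases "x \<in> cball c R")
      case True
      then have "norm (f x) \<le> M0" using M0 by blast
      then show ?thesis using True by simp
    qed (simp add: vanish)
  qed simp
qed

lemma integrable_lborel_cball_bounded:
  fixes f :: "'a::euclidean_space \<Rightarrow> real"
  assumes [measurable]: "f \<in> borel_measurable borel" and b: "\<And>x. \<bar>f x\<bar> \<le> M * indicator (cball c r) x"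
  shows "integrable lborel f"
proof (rule Bochner_Integration.integrable_bound)
  show "integrable lborel (\<lambda>x. M * indicator (cball c r) x)"
    using emeasure_lborel_cball_finite[of c r] by (intro integrable_mult_right integrable_real_indicator) auto
  show "AE x in lborel. norm (f x) \<le> norm (M * indicator (cball c r) x)"
    using b by (auto intro!: AE_I2 order_trans[OF _ abs_ge_self])
qed simp

lemma integral_lborel_difference_quotient_eq_0:
  fixes f :: "'a::euclidean_space \<Rightarrow> real"
  assumes f: "integrable lborel f"
  shows "(\<integral>x. (f (x + d) - f x) / h \<partial>lborel) = 0"
proof -
  have [measurable]: "f \<in> borel_measurable borel"
    using borel_measurable_integrable[OF f] by simp
  have distr: "distr lborel borel ((+) d) = lborel"
    by (rule lborel_distr_plus)
  have "integrable lborel (\<lambda>x. f (d + x))"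
    using f by (subst (asm) distr[symmetric]) (simp add: integrable_distr_eq)
  moreover have "(\<integral>x. f (d + x) \<partial>lborel) = (\<integral>x. f x \<partial>lborel)"
    using integral_distr[of "(+) d" lborel borel f] by (simp add: distr)
  ultimately show ?thesis
    using f by (simp add: add.commute)
qed

lemma tendsto_difference_quotient:
  fixes \<phi> :: "'a::euclidean_space \<Rightarrow> real"
  assumes v: "has_continuous_gradient \<phi> gr" and h: "filterlim h (at 0) sequentially"
  shows "(\<lambda>k. (\<phi> (x + h k *\<^sub>R e) - \<phi> x) / h k) \<longlonglongrightarrow> gr x \<bullet> e"
proof -
  have "((\<lambda>t. (\<phi> (x + (0 + t) *\<^sub>R e) - \<phi> (x + 0 *\<^sub>R e)) / t) \<longlongrightarrow> gr (x + 0 *\<^sub>R e) \<bullet> e) (at 0)"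
    using has_continuous_gradient_line_derivative[OF v, of x e 0] unfolding DERIV_def .
  then have "((\<lambda>t. (\<phi> (x + t *\<^sub>R e) - \<phi> x) / t) \<longlongrightarrow> gr x \<bullet> e) (at 0)"
    by simp
  from filterlim_compose[OF this h] show ?thesis
    by (simp add: o_def)
qed

lemma difference_quotient_le_indicator:
  fixes \<phi> :: "'a::euclidean_space \<Rightarrow> real"
  assumes v: "has_continuous_gradient \<phi> gr" and Mg: "\<And>x. norm (gr x) \<le> Mg"
    and vanish: "\<And>x. x \<notin> cball c R \<Longrightarrow> \<phi> x = 0" and e: "norm e = 1" and h: "0 < h" "h \<le> 1"
  shows "\<bar>(\<phi> (x + h *\<^sub>R e) - \<phi> x) / h\<bar> \<le> Mg * indicator (cball c (R + 1)) x"
proof (cases "x \<in> cball c (R + 1)")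
  case True
  obtain z where "\<phi> (x + h *\<^sub>R e) - \<phi> (x + 0 *\<^sub>R e) = (h - 0) * (gr (x + z *\<^sub>R e) \<bullet> e)"
    using MVT2[of 0 h "\<lambda>t. \<phi> (x + t *\<^sub>R e)" "\<lambda>t. gr (x + t *\<^sub>R e) \<bullet> e"] h
      has_continuous_gradient_line_derivative[OF v, of x e]
    by blast
  then have "(\<phi> (x + h *\<^sub>R e) - \<phi> x) / h = gr (x + z *\<^sub>R e) \<bullet> e"
    using h by simp
  also have "\<bar>\<dots>\<bar> \<le> norm (gr (x + z *\<^sub>R e)) * norm e" by (rule Cauchy_Schwarz_ineq2)
  also have "\<dots> \<le> Mg" using Mg e by simp
  finally show ?thesis using True by simp
next
  case False
  have "dist c x \<le> dist c (x + h *\<^sub>R e) + dist (x + h *\<^sub>R e) x" by (rule dist_triangle)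
  also have "dist (x + h *\<^sub>R e) x = h" using e h by (simp add: dist_norm)
  finally have "x \<notin> cball c R" "x + h *\<^sub>R e \<notin> cball c R"
    using False h by auto
  then show ?thesis using False by (simp add: vanish)
qed

lemma integral_directional_derivative_eq_0:
  fixes \<phi> :: "'a::euclidean_space \<Rightarrow> real"
  assumes v: "has_continuous_gradient \<phi> gr"
    and vanish: "\<And>x. x \<notin> cball c R \<Longrightarrow> \<phi> x = 0" "\<And>x. x \<notin> cball c R \<Longrightarrow> gr x = 0"
    and e: "norm e = 1"
  shows "(\<integral>x. gr x \<bullet> e \<partial>lborel) = 0"
proof -
  have [measurable]: "\<phi> \<in> borel_measurable borel" "gr \<in> borel_measurable borel"
    using has_continuous_gradientD[OF v] by auto
  obtain Mp where Mp: "\<And>x. norm (\<phi> x) \<le> Mp * indicator (cball c R) x"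
    using continuous_vanishing_outside_cball_bound[OF has_continuous_gradientD(3)[OF v] vanish(1)] by blast
  obtain Mg where "0 \<le> Mg" and "\<And>x. norm (gr x) \<le> Mg * indicator (cball c R) x"
    using continuous_vanishing_outside_cball_bound[OF has_continuous_gradientD(2)[OF v] vanish(2)] by blast
  then have Mg: "norm (gr x) \<le> Mg" for x
    by (metis indicator_le_1 mult_left_le order.trans)
  define h where "h k = inverse (real (Suc k))" for k
  have h: "0 < h k" "h k \<le> 1" for k
    by (auto simp: h_def inverse_le_1_iff)
  have "h \<longlonglongrightarrow> 0"
    unfolding h_def by (rule LIMSEQ_inverse_real_of_nat)
  then have h_at_0: "filterlim h (at 0) sequentially"
    using h(1) unfolding filterlim_at by (auto intro: always_eventually simp: less_imp_neq[symmetric])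
  define s where "s k x = (\<phi> (x + h k *\<^sub>R e) - \<phi> x) / h k" for k x
  have [measurable]: "s k \<in> borel_measurable borel" for k
    unfolding s_def by measurable
  have "integrable lborel (\<lambda>x. Mg * indicator (cball c (R + 1)) x)"
    using emeasure_lborel_cball_finite[of c "R + 1"]
    by (intro integrable_mult_right integrable_real_indicator) auto
  then have "(\<lambda>k. \<integral>x. s k x \<partial>lborel) \<longlonglongrightarrow> (\<integral>x. gr x \<bullet> e \<partial>lborel)"
  proof (rule integral_dominated_convergence[rotated 2])
    show "AE x in lborel. (\<lambda>k. s k x) \<longlonglongrightarrow> gr x \<bullet> e"
      using tendsto_difference_quotient[OF v h_at_0] by (simp add: s_def)
    show "AE x in lborel. norm (s k x) \<le> Mg * indicator (cball c (R + 1)) x" for k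
      using difference_quotient_le_indicator[where c=c and R=R, OF v Mg vanish(1) e h] by (simp add: s_def)
  qed measurable
  moreover have "(\<integral>x. s k x \<partial>lborel) = 0" for k
    using Mp unfolding s_def
    by (intro integral_lborel_difference_quotient_eq_0 integrable_lborel_cball_bounded) auto
  ultimately show ?thesis
    by (simp add: LIMSEQ_const_iff)
qed

lemma integral_pd_lborel_eq_0:
  fixes \<phi> :: "real^'n::finite \<Rightarrow> real"
  assumes sm: "smooth_on \<phi> UNIV" and supp: "closure {x. \<phi> x \<noteq> 0} \<subseteq> cball c R"
  shows "(\<integral>x. pd i \<phi> x \<partial>lborel) = 0"
proof -
  have vanish: "\<phi> x = 0" "(\<chi> j. pd j \<phi> x) = 0" if "x \<notin> cball c R" for x
  proof -
    have "x \<notin> closure {x. \<phi> x \<noteq> 0}" using that supp by blast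
    then show "\<phi> x = 0" "(\<chi> j. pd j \<phi> x) = 0"
      using closure_subset[of "{x. \<phi> x \<noteq> 0}"] pd_eq_0_outside_support[of x \<phi>]
      by (auto simp: vec_eq_iff)
  qed
  have "pd i \<phi> x = (\<chi> j. pd j \<phi> x) \<bullet> axis i 1" for x
    by (simp add: inner_axis)
  then show ?thesis
    using integral_directional_derivative_eq_0[OF smooth_on_has_continuous_gradient[OF sm] vanish]
    by simp
qed

lemma integral_pd_test_fun_eq_0:
  fixes \<phi> :: "real^'n::finite \<Rightarrow> real"
  assumes "test_fun (ball c R) \<phi>"
  shows "(\<integral>x. pd i \<phi> x \<partial>lebesgue_on (ball c R)) = 0"
proof -
  have sm: "smooth_on \<phi> UNIV" and supp: "closure {x. \<phi> x \<noteq> 0} \<subseteq> ball c R"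
    using assms unfolding test_fun_def by auto
  have [measurable]: "pd i \<phi> \<in> borel_measurable borel"
    using smooth_on_continuous[OF smooth_onD(3)[OF sm]] by (rule borel_measurable_continuous_onI)
  have "(\<integral>x. pd i \<phi> x \<partial>lebesgue_on (ball c R)) = (\<integral>x. indicator (ball c R) x *\<^sub>R pd i \<phi> x \<partial>lebesgue)"
    by (rule integral_restrict_space) auto
  also have "\<dots> = (\<integral>x. pd i \<phi> x \<partial>lebesgue)"
  proof (intro Bochner_Integration.integral_cong refl)
    fix x
    show "indicator (ball c R) x *\<^sub>R pd i \<phi> x = pd i \<phi> x"
    proof (cases "x \<in> ball c R")
      case False
      then have "x \<notin> closure {x. \<phi> x \<noteq> 0}" using supp by blast
      then show ?thesis using False by (simp add: pd_eq_0_outside_support)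
    qed simp
  qed
  also have "\<dots> = (\<integral>x. pd i \<phi> x \<partial>lborel)"
    by (rule integral_completion) simp
  also have "\<dots> = 0"
    using integral_pd_lborel_eq_0[OF sm order_trans[OF supp ball_subset_cball]] .
  finally show ?thesis .
qed

lemma H1_grad_const_one: "H1_grad (ball c R) (\<lambda>_. 1) (\<lambda>i (_::real^'n::finite). 0)"
  unfolding H1_grad_def L2_on_def
  using integral_pd_test_fun_eq_0[of c R]
    finite_measure.integrable_const[OF finite_measure_lebesgue_on[OF lmeasurable_ball]]
  by auto

lemma bdry_abs_int_const_one:
  "bdry_abs_int c R (\<lambda>_. 1) (\<lambda>i (_::real^'n::finite). 0) (perimeter_ball c R)"
  unfolding bdry_abs_int_def perimeter_ball_def
  by (rule exI[of _ "\<lambda>k _. 1"]) (simp add: smooth_on_const pd_const)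

lemma lambda_ball_le_quotient:
  assumes "0 < m" "H1_grad (ball c R) u g" "bdry_abs_int c R u g L"
    "(\<integral>x. (u x)^2 \<partial>lebesgue_on (ball c R)) \<noteq> 0"
  shows "lambda_ball c R m \<le> ((\<integral>x. (\<Sum>i\<in>UNIV. (g i x)^2) \<partial>lebesgue_on (ball c R)) + L^2 / m)
      / (\<integral>x. (u x)^2 \<partial>lebesgue_on (ball c R))"
  unfolding lambda_ball_def
proof (rule cInf_lower)
  show "bdd_below {((\<integral>x. (\<Sum>i\<in>UNIV. (g i x)^2) \<partial>lebesgue_on (ball c R)) + L^2 / m)
        / (\<integral>x. (u x)^2 \<partial>lebesgue_on (ball c R)) | u g L.
      H1_grad (ball c R) u g \<and> bdry_abs_int c R u g L \<and>
      (\<integral>x. (u x)^2 \<partial>lebesgue_on (ball c R)) \<noteq> 0}"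
    using assms(1)
    by (intro bdd_belowI[of _ 0])
       (auto intro!: divide_nonneg_nonneg add_nonneg_nonneg integral_nonneg_AE sum_nonneg)
qed (use assms in blast)

lemma le_lambda_ball:
  fixes c :: "real^'n::finite"
  assumes R: "0 < R"
    and bound: "\<And>u g L. H1_grad (ball c R) u g \<Longrightarrow> bdry_abs_int c R u g L \<Longrightarrow>
      (\<integral>x. (u x)^2 \<partial>lebesgue_on (ball c R)) \<noteq> 0 \<Longrightarrow>
      b \<le> ((\<integral>x. (\<Sum>i\<in>UNIV. (g i x)^2) \<partial>lebesgue_on (ball c R)) + L^2 / m)
        / (\<integral>x. (u x)^2 \<partial>lebesgue_on (ball c R))"
  shows "b \<le> lambda_ball c R m"
  unfolding lambda_ball_def
proof (rule cInf_greatest)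
  have "(\<integral>x. (1::real)^2 \<partial>lebesgue_on (ball c R)) \<noteq> 0"
    using R by simp
  then show "{((\<integral>x. (\<Sum>i\<in>UNIV. (g i x)^2) \<partial>lebesgue_on (ball c R)) + L^2 / m)
        / (\<integral>x. (u x)^2 \<partial>lebesgue_on (ball c R)) | u g L.
      H1_grad (ball c R) u g \<and> bdry_abs_int c R u g L \<and>
      (\<integral>x. (u x)^2 \<partial>lebesgue_on (ball c R)) \<noteq> 0} \<noteq> {}"
    using H1_grad_const_one[of c R] bdry_abs_int_const_one[of c R] by blast
qed (use bound in blast)

lemma lambda_ball_upper_bound:
  fixes c :: "real^'n::finite"
  assumes R: "0 < R" and m: "0 < m"
  shows "m * lambda_ball c R m \<le> (perimeter_ball c R)^2 / measure lebesgue (ball c R)"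
proof -
  have "(\<integral>x. (1::real)^2 \<partial>lebesgue_on (ball c R)) = measure lebesgue (ball c R)"
    by simp
  then have "lambda_ball c R m \<le> (0 + (perimeter_ball c R)^2 / m) / measure lebesgue (ball c R)"
    using lambda_ball_le_quotient[OF m H1_grad_const_one bdry_abs_int_const_one] R by force
  then have "m * lambda_ball c R m \<le> m * ((perimeter_ball c R)^2 / m / measure lebesgue (ball c R))"
    using m by (intro mult_left_mono) auto
  then show ?thesis
    using m by simp
qed

lemma lambda_ball_lower_bound:
  fixes c :: "real^'n::finite"
  assumes R: "0 < R" and e: "0 < e" "e < 1"
  shows "\<forall>\<^sub>F m in at_top. (perimeter_ball c R)^2 / measure lebesgue (ball c R) * ((1 - e) / (1 + e))
      \<le> m * lambda_ball c R m"
proof -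
  define \<kappa> where "\<kappa> = (perimeter_ball c R)^2 / measure lebesgue (ball c R) * ((1 - e) / (1 + e))"
  obtain M where M: "\<And>m u g L. M \<le> m \<Longrightarrow> H1_grad (ball c R) u g \<Longrightarrow> bdry_abs_int c R u g L \<Longrightarrow>
      \<kappa> * (\<integral>x. (u x)^2 \<partial>lebesgue_on (ball c R))
      \<le> m * (\<integral>x. (\<Sum>i\<in>UNIV. (g i x)^2) \<partial>lebesgue_on (ball c R)) + L^2"
    using H1_rayleigh_lower_bound[OF R e, of c] unfolding \<kappa>_def by blast
  have "\<kappa> \<le> m * lambda_ball c R m" if m: "max M 1 \<le> m" for m
  proof -
    have m0: "0 < m" using m by simp
    have "\<kappa> / m \<le> lambda_ball c R m"
    proof (rule le_lambda_ball[OF R])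
      fix u g L
      assume H: "H1_grad (ball c R) u g" and B: "bdry_abs_int c R u g L"
        and nz: "(\<integral>x. (u x)^2 \<partial>lebesgue_on (ball c R)) \<noteq> 0"
      have "0 < (\<integral>x. (u x)^2 \<partial>lebesgue_on (ball c R))"
        using nz by (simp add: integral_nonneg_AE order_less_le)
      then show "\<kappa> / m \<le> ((\<integral>x. (\<Sum>i\<in>UNIV. (g i x)^2) \<partial>lebesgue_on (ball c R)) + L^2 / m)
          / (\<integral>x. (u x)^2 \<partial>lebesgue_on (ball c R))"
        using M[OF _ H B, of m] m m0 by (simp add: field_simps)
    qed
    then show ?thesis
      using m0 by (simp add: field_simps)
  qed
  then show ?thesis
    unfolding \<kappa>_def eventually_at_top_linorder by blast
qed

lemma tendsto_of_factor_squeeze: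
  fixes f :: "'a \<Rightarrow> real"
  assumes upper: "\<forall>\<^sub>F x in F. f x \<le> K"
    and lower: "\<And>e. 0 < e \<Longrightarrow> e < 1 \<Longrightarrow> \<forall>\<^sub>F x in F. K * ((1 - e) / (1 + e)) \<le> f x"
  shows "(f \<longlongrightarrow> K) F"
proof (rule tendstoI)
  fix \<epsilon> :: real
  assume \<epsilon>: "0 < \<epsilon>"
  define e where "e = min (1/2) (\<epsilon> / (2 * \<bar>K\<bar> + 1))"
  have e: "0 < e" "e < 1" using \<epsilon> by (auto simp: e_def)
  have "\<bar>K - K * ((1 - e) / (1 + e))\<bar> = 2 * e * \<bar>K\<bar> / (1 + e)"
    using e by (simp add: field_simps abs_mult)
  also have "\<dots> \<le> 2 * e * \<bar>K\<bar>"
  proof -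
    have "0 \<le> e * \<bar>K\<bar>" using e by simp
    then show ?thesis using e by (simp add: divide_le_eq mult_le_cancel_left1 not_less)
  qed
  also have "\<dots> < \<epsilon>"
  proof -
    have "e \<le> \<epsilon> / (2 * \<bar>K\<bar> + 1)" by (simp add: e_def)
    moreover have "0 < 2 * \<bar>K\<bar> + 1" by simp
    ultimately have "e * (2 * \<bar>K\<bar> + 1) \<le> \<epsilon>" by (simp add: le_divide_eq)
    then show ?thesis using e by (simp add: algebra_simps)
  qed
  finally have gap: "\<bar>K - K * ((1 - e) / (1 + e))\<bar> < \<epsilon>" .
  show "\<forall>\<^sub>F x in F. dist (f x) K < \<epsilon>"
    using upper lower[OF e]
    by eventually_elim (use gap in \<open>auto simp: dist_real_def abs_if split: if_splits\<close>)
qed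

theorem corollary5p7:
  fixes c :: "real^'n::finite" and R :: real
  assumes "CARD('n) \<ge> 2" and "R > 0"
  shows "((\<lambda>m. m * lambda_ball c R m) \<longlongrightarrow>
           (perimeter_ball c R)^2 / measure lebesgue (ball c R)) at_top"
proof (rule tendsto_of_factor_squeeze)
  show "\<forall>\<^sub>F m in at_top. m * lambda_ball c R m \<le> (perimeter_ball c R)^2 / measure lebesgue (ball c R)"
    using eventually_gt_at_top[of 0] by eventually_elim (rule lambda_ball_upper_bound[OF \<open>R > 0\<close>])
  show "\<forall>\<^sub>F m in at_top. (perimeter_ball c R)^2 / measure lebesgue (ball c R) * ((1 - e) / (1 + e))
      \<le> m * lambda_ball c R m" if "0 < e" "e < 1" for e
    by (rule lambda_ball_lower_bound[OF \<open>R > 0\<close> that])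
qed

end
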